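(* Let $G$ be an extraspecial or almost extraspecial $2$-group of order $2^n$, $n\geq 3$. Then for every $0\leq k\leq n$, $$s_k(G)\leq s_k(D_8\times C_2^{n-3}).$$
   Context: A finite $2$-group $G$ is extraspecial if $Z(G)=G'=\Phi(G)$ has order $2$, and almost extraspecial if $G'=\Phi(G)$ has order $2$ and $Z(G)\cong C_4$. For a finite $2$-group $G$ of order $2^n$ and $0\le k\le n$, $s_k(G)$ is the number of subgroups of $G$ of order $2^k$. $D_8$ is the dihedral group of order $8$, $C_2^m$ the elementary abelian group of order $2^m$. *)

theory Defs
  imports "HOL-Algebra.Algebra" "HOL-Algebra.Weak_Morphisms"
begin

definition center :: "('a, 'b) monoid_scheme \<Rightarrow> 'a set" where
  "center G = {z \<in> carrier G. \<forall>g \<in> carrier G. z \<otimes>\<^bsub>G\<^esub> g = g \<otimes>\<^bsub>G\<^esub> z}"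

definition commutator_subgroup :: "('a, 'b) monoid_scheme \<Rightarrow> 'a set" where
  "commutator_subgroup G = derived G (carrier G)"

definition maximal_subgroup :: "('a, 'b) monoid_scheme \<Rightarrow> 'a set \<Rightarrow> bool" where
  "maximal_subgroup G H \<longleftrightarrow> subgroup H G \<and> H \<noteq> carrier G \<and>
     (\<forall>K. subgroup K G \<and> H \<subseteq> K \<and> K \<noteq> carrier G \<longrightarrow> K = H)"

text \<open>Frattini subgroup: intersection of all maximal subgroups (= the whole group if there are none).\<close>
definition frattini :: "('a, 'b) monoid_scheme \<Rightarrow> 'a set" where
  "frattini G = carrier G \<inter> \<Inter>{H. maximal_subgroup G H}"

definition extraspecial :: "('a, 'b) monoid_scheme \<Rightarrow> bool" where
  "extraspecial G \<longleftrightarrow> center G = commutator_subgroup G \<and> commutator_subgroup G = frattini G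
     \<and> card (center G) = 2"

definition almost_extraspecial :: "('a, 'b) monoid_scheme \<Rightarrow> bool" where
  "almost_extraspecial G \<longleftrightarrow> commutator_subgroup G = frattini G \<and> card (commutator_subgroup G) = 2
     \<and> G\<lparr>carrier := center G\<rparr> \<cong> integer_mod_group 4"

text \<open>s_k(G) with 2^k given as m: number of subgroups of order m.\<close>
definition num_subgroups_of_order :: "('a, 'b) monoid_scheme \<Rightarrow> nat \<Rightarrow> nat" where
  "num_subgroups_of_order G m = card {H. subgroup H G \<and> card H = m}"

text \<open>Dihedral group of order 8: (a, b) stands for r^a s^b, with r^4 = s^2 = 1, s r s = r^-1.\<close>
definition D8 :: "(int \<times> bool) monoid" where
  "D8 = \<lparr>carrier = {0..<4} \<times> UNIV,
         monoid.mult = (\<lambda>(a, b) (c, d). ((if b then a - c else a + c) mod 4, b \<noteq> d)),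
         one = (0, False)\<rparr>"

definition C2_pow :: "nat \<Rightarrow> int list monoid" where
  "C2_pow m = DirProd_list (replicate m (integer_mod_group 2))"

definition D8_times_C2_pow :: "nat \<Rightarrow> ((int \<times> bool) \<times> int list) monoid" where
  "D8_times_C2_pow m = D8 \<times>\<times> C2_pow m"

end

theory Submission
  imports Defs
begin

text \<open>Let \<open>G' = \<Phi>(G) = {\<one>, z}\<close>. Then \<open>z\<close> is central, all squares and commutators lie in
  \<open>{\<one>, z}\<close>, and some non-central \<open>r\<close> has \<open>r \<otimes> r = z\<close>; only these facts are used.
  The subgroups of order \<open>2 ^ k\<close> containing \<open>z\<close> correspond to the \<open>(k - 1)\<close>-dimensional subspaces
  of \<open>G/{\<one>, z} \<cong> (\<int>/2) ^ (n - 1)\<close>, in \<open>G\<close> and in \<open>D\<^sub>8 \<times> C\<^sub>2 ^ (n - 3)\<close> alike. A subgroup \<open>H\<close>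

  avoiding \<open>z\<close> is elementary abelian and meets \<open>R = \<langle>r\<rangle> \<cong> C\<^sub>4\<close> trivially, so \<open>R H\<close> is one of
  the \<open>[n - 2, k]\<^sub>2\<close> subgroups of order \<open>4 * 2 ^ k\<close> containing \<open>R\<close>. A given \<open>R H\<close> comes from at most
  \<open>2 ^ k\<close> such \<open>H\<close> if it centralizes \<open>r\<close>, and from at most \<open>2 ^ (k + 1)\<close> otherwise. In
  \<open>D\<^sub>8 \<times> C\<^sub>2 ^ (n - 3)\<close> these bounds are attained, because every subgroup avoiding \<open>z\<close> lies in one
  of two elementary abelian subgroups of index 2.\<close>

section \<open>Finite groups\<close>

context group
begin

lemma normal_if_commutators_mem:
  assumes N: "subgroup N G"
    and comm: "\<And>x h. x \<in> carrier G \<Longrightarrow> h \<in> N \<Longrightarrow> x \<otimes> h \<otimes> inv x \<otimes> inv h \<in> N"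
  shows "N \<lhd> G"
  unfolding normal_inv_iff
proof (intro conjI ballI N)
  fix x h assume x: "x \<in> carrier G" and h: "h \<in> N"
  have hG: "h \<in> carrier G" using h N subgroup.subset by blast
  have "x \<otimes> h \<otimes> inv x = (x \<otimes> h \<otimes> inv x \<otimes> inv h) \<otimes> h"
    using x hG by (simp add: m_assoc)
  then show "x \<otimes> h \<otimes> inv x \<in> N"
    using subgroup.m_closed[OF N comm[OF x h] h] by simp
qed

lemma set_mult_subgroups_supset:
  assumes "subgroup N G" "subgroup H G"
  shows "N \<subseteq> N <#> H" "H \<subseteq> N <#> H"
proof -
  have "n \<otimes> \<one> \<in> N <#> H" if "n \<in> N" for n
    using that subgroup.one_closed[OF assms(2)] unfolding set_mult_def by blast
  then show "N \<subseteq> N <#> H" using assms(1) subgroup.subset by fastforce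
  have "\<one> \<otimes> h \<in> N <#> H" if "h \<in> H" for h
    using that subgroup.one_closed[OF assms(1)] unfolding set_mult_def by blast
  then show "H \<subseteq> N <#> H" using assms(2) subgroup.subset by fastforce
qed

lemma card_set_mult_inter_one:
  assumes N: "subgroup N G" and H: "subgroup H G" and fin: "finite N" "finite H"
    and inter: "N \<inter> H = {\<one>}"
  shows "card (N <#> H) = card N * card H"
proof -
  have NG: "N \<subseteq> carrier G" and HG: "H \<subseteq> carrier G" using N H subgroup.subset by blast+
  have "inj_on (\<lambda>(n, h). n \<otimes> h) (N \<times> H)"
  proof (rule inj_onI, clarsimp)
    fix n h n' h' assume a: "n \<in> N" "h \<in> H" "n' \<in> N" "h' \<in> H" "n \<otimes> h = n' \<otimes> h'"
    have G: "n \<in> carrier G" "h \<in> carrier G" "n' \<in> carrier G" "h' \<in> carrier G" using a NG HG by auto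
    have "inv n' \<otimes> n = h' \<otimes> inv h"
    proof -
      have "inv n' \<otimes> n = inv n' \<otimes> (n \<otimes> h) \<otimes> inv h" using G by (simp add: m_assoc)
      also have "\<dots> = h' \<otimes> inv h" using a(5) G by (simp add: m_assoc[symmetric])
      finally show ?thesis .
    qed
    moreover have "inv n' \<otimes> n \<in> N" "h' \<otimes> inv h \<in> H"
      using a subgroup.m_closed subgroup.m_inv_closed N H by metis+
    ultimately have "inv n' \<otimes> n = \<one>" "h' \<otimes> inv h = \<one>" using inter by auto
    then show "n = n' \<and> h = h'" using G by (metis inv_equality inv_inv inv_closed)
  qed
  moreover have "N <#> H = (\<lambda>(n, h). n \<otimes> h) ` (N \<times> H)" by (auto simp: set_mult_def)
  ultimately show ?thesis by (simp add: card_image card_cartesian_product)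
qed

lemma Un_lcoset_mult_closed:
  assumes S: "subgroup S G" and x: "x \<in> carrier G" "x \<otimes> x \<in> S"
    and swap: "\<And>s. s \<in> S \<Longrightarrow> \<exists>s'\<in>S. s \<otimes> x = x \<otimes> s'"
    and ab: "a \<in> S \<union> (\<otimes>) x ` S" "b \<in> S \<union> (\<otimes>) x ` S"
  shows "a \<otimes> b \<in> S \<union> (\<otimes>) x ` S"
proof -
  interpret S: subgroup S G by (rule S)
  have pass: "\<exists>u\<in>S. s \<otimes> (x \<otimes> t) = x \<otimes> u" if "s \<in> S" "t \<in> S" for s t
  proof -
    obtain s' where "s' \<in> S" "s \<otimes> x = x \<otimes> s'" using swap \<open>s \<in> S\<close> by blast
    then have "s \<otimes> (x \<otimes> t) = x \<otimes> (s' \<otimes> t)" using that x by (simp add: m_assoc[symmetric])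
    then show ?thesis using \<open>s' \<in> S\<close> \<open>t \<in> S\<close> by blast
  qed
  from ab consider "a \<in> S" "b \<in> S" | t where "a \<in> S" "b = x \<otimes> t" "t \<in> S"
    | s where "a = x \<otimes> s" "s \<in> S" "b \<in> S" | s t where "a = x \<otimes> s" "s \<in> S" "b = x \<otimes> t" "t \<in> S"
    by blast
  then show ?thesis
  proof cases
    case 1 then show ?thesis by blast
  next
    case 2 then show ?thesis using pass by blast
  next
    case 3 then show ?thesis using x by (auto simp: m_assoc)
  next
    case (4 s t)
    obtain u where u: "u \<in> S" "s \<otimes> (x \<otimes> t) = x \<otimes> u" using pass 4 by blast
    have "a \<otimes> b = (x \<otimes> x) \<otimes> u" using 4 u x by (simp add: m_assoc)
    then show ?thesis using S.m_closed[OF x(2) u(1)] by simp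
  qed
qed

lemma subgroup_Un_lcoset:
  assumes S: "subgroup S G" and x: "x \<in> carrier G" "x \<otimes> x \<in> S"
    and swap: "\<And>s. s \<in> S \<Longrightarrow> \<exists>s'\<in>S. s \<otimes> x = x \<otimes> s'"
  shows "subgroup (S \<union> (\<otimes>) x ` S) G"
proof -
  interpret S: subgroup S G by (rule S)
  note mult = Un_lcoset_mult_closed[OF S x swap]
  have "inv x = x \<otimes> inv (x \<otimes> x)" using x by (simp add: inv_mult_group m_assoc[symmetric])
  then have inv_x: "inv x \<in> S \<union> (\<otimes>) x ` S" using x(2) by blast
  show ?thesis
  proof (rule subgroupI)
    show "S \<union> (\<otimes>) x ` S \<subseteq> carrier G" using x by auto
    show "S \<union> (\<otimes>) x ` S \<noteq> {}" using S.one_closed by blast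
  next
    fix a assume a: "a \<in> S \<union> (\<otimes>) x ` S"
    show "inv a \<in> S \<union> (\<otimes>) x ` S"
    proof (cases "a \<in> S")
      case False
      then obtain s where "s \<in> S" "a = x \<otimes> s" using a by blast
      then have "inv a = inv s \<otimes> inv x" using x by (simp add: inv_mult_group)
      then show ?thesis using mult[of "inv s" "inv x"] inv_x \<open>s \<in> S\<close> by simp
    qed simp
  qed (rule mult)
qed

lemma card_Un_lcoset:
  assumes S: "subgroup S G" "finite S" and x: "x \<in> carrier G" "x \<notin> S"
  shows "card (S \<union> (\<otimes>) x ` S) = 2 * card S"
proof -
  have SG: "S \<subseteq> carrier G" using S subgroup.subset by blast
  have "S \<inter> (\<otimes>) x ` S = {}"
  proof (rule ccontr)
    assume "S \<inter> (\<otimes>) x ` S \<noteq> {}"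
    then obtain s where s: "s \<in> S" "x \<otimes> s \<in> S" by auto
    then have "x \<otimes> s \<otimes> inv s \<in> S" using subgroup.m_closed subgroup.m_inv_closed S(1) by metis
    then show False using s SG x by (simp add: m_assoc subset_iff)
  qed
  moreover have "inj_on ((\<otimes>) x) S" using SG x by (auto simp: inj_on_def subset_iff)
  ultimately show ?thesis using S(2) by (simp add: card_Un_disjoint card_image)
qed

lemma subgroup_of_involutions:
  assumes "S \<subseteq> carrier G" "\<one> \<in> S" "\<And>x y. x \<in> S \<Longrightarrow> y \<in> S \<Longrightarrow> x \<otimes> y \<in> S"
    and "\<And>x. x \<in> S \<Longrightarrow> x \<otimes> x = \<one>"
  shows "subgroup S G"
proof (rule subgroupI)
  show "S \<subseteq> carrier G" "S \<noteq> {}" using assms(1,2) by auto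
  show "inv a \<in> S" if "a \<in> S" for a
    using inv_equality[OF assms(4)[OF that]] assms(1) that by auto
qed (rule assms(3))

lemma subgroup_involution:
  assumes "z \<in> carrier G" "z \<otimes> z = \<one>"
  shows "subgroup {\<one>, z} G"
  by (rule subgroup_of_involutions) (use assms in auto)

lemma square_mult_commuting:
  assumes x: "x \<in> carrier G" and y: "y \<in> carrier G" and xy: "x \<otimes> y = y \<otimes> x"
  shows "(x \<otimes> y) \<otimes> (x \<otimes> y) = (x \<otimes> x) \<otimes> (y \<otimes> y)"
proof -
  have "(x \<otimes> y) \<otimes> (x \<otimes> y) = x \<otimes> (y \<otimes> x) \<otimes> y" using x y by (simp add: m_assoc)
  also have "\<dots> = x \<otimes> (x \<otimes> y) \<otimes> y" by (simp only: xy)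
  also have "\<dots> = (x \<otimes> x) \<otimes> (y \<otimes> y)" using x y by (simp add: m_assoc)
  finally show ?thesis .
qed

lemma num_subgroups_of_order_1: "num_subgroups_of_order G 1 = 1"
proof -
  have "{H. subgroup H G \<and> card H = 1} = {{\<one>}}"
    using triv_subgroup subgroup.one_closed by (fastforce simp: card_1_singleton_iff)
  then show ?thesis unfolding num_subgroups_of_order_def by simp
qed

lemma odd_int_pow_mem:
  assumes fin: "finite (carrier G)" and card_G: "card (carrier G) = 2 ^ n"
    and M: "subgroup M G" and x: "x \<in> carrier G" and pow: "x [^] (a::int) \<in> M" and odd: "odd a"
  shows "x \<in> M"
proof -
  have "coprime a (2 ^ n)" using odd by simp
  then obtain u v where uv: "u * a + v * 2 ^ n = 1" using bezout_int[of a "2 ^ n"] by auto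
  have "x [^] (2 ^ n :: int) = \<one>"
    using pow_order_eq_1[OF x] card_G int_pow_int[of G x "2 ^ n"] by (simp add: order_def)
  then have "x [^] (v * 2 ^ n) = \<one>"
    using int_pow_pow[OF x, of "2 ^ n" v] by (simp add: mult.commute)
  moreover have "x = x [^] (u * a) \<otimes> x [^] (v * 2 ^ n)"
    using x uv int_pow_mult[OF x, of "u * a" "v * 2 ^ n"] by simp
  ultimately have "x = (x [^] a) [^] u"
    using x int_pow_pow[OF x, of a u] by (simp add: mult.commute)
  with subgroup_int_pow_closed[OF M pow] show ?thesis by metis
qed

lemma square_mem_normal_maximal:
  assumes fin: "finite (carrier G)" and card_G: "card (carrier G) = 2 ^ n"
    and max: "maximal_subgroup G M" and normal: "M \<lhd> G" and x: "x \<in> carrier G"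
  shows "x \<otimes> x \<in> M"
proof (rule ccontr)
  let ?y = "x \<otimes> x"
  assume y_notin: "?y \<notin> M"
  have M: "subgroup M G" and M_max: "\<And>K. subgroup K G \<Longrightarrow> M \<subseteq> K \<Longrightarrow> K \<noteq> carrier G \<Longrightarrow> K = M"
    using max unfolding maximal_subgroup_def by auto
  have yG: "?y \<in> carrier G" using x by simp
  let ?K = "M <#> generate G {?y}"
  have K: "subgroup ?K G" using mult_norm_subgroup[OF normal generate_is_subgroup] yG by simp
  have "M \<subseteq> ?K" "generate G {?y} \<subseteq> ?K"
    using set_mult_subgroups_supset[OF M generate_is_subgroup] yG by auto
  moreover have "?y \<in> generate G {?y}" using yG by (simp add: generate.incl)
  ultimately have "?K = carrier G" using M_max[OF K] y_notin by blast
  then have "x \<in> M <#> generate G {?y}" using x by simp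
  then obtain m k where mk: "m \<in> M" "x = m \<otimes> ?y [^] (k::int)"
    unfolding set_mult_def generate_pow[OF yG] by blast
  have mG: "m \<in> carrier G" using mk(1) M subgroup.subset by blast
  have "?y = x [^] (2::int)" using int_pow_mult[OF x, of 1 1] x by simp
  then have "?y [^] k = x [^] (2 * k)" using int_pow_pow[OF x] by simp
  then have "x = m \<otimes> x [^] (2 * k)" using mk(2) by simp
  then have "x \<otimes> inv (x [^] (2 * k)) = m"
    using mG x by (metis inv_closed int_pow_closed m_assoc r_inv r_one)
  then have "m = x [^] (1 - 2 * k)" using int_pow_diff[OF x, of 1 "2 * k"] x by simp
  then have "x \<in> M" using odd_int_pow_mem[OF fin card_G M x] mk(1) by simp
  then show False using y_notin subgroup.m_closed[OF M] by blast
qed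

lemma commutator_mem_commutator_subgroup:
  "x \<in> carrier G \<Longrightarrow> y \<in> carrier G \<Longrightarrow> x \<otimes> y \<otimes> inv x \<otimes> inv y \<in> commutator_subgroup G"
  unfolding commutator_subgroup_def derived_def by (rule generate.incl) blast

text \<open>A maximal subgroup containing \<open>G'\<close> is normal, hence contains all squares.\<close>

lemma square_mem_frattini:
  assumes fin: "finite (carrier G)" and card_G: "card (carrier G) = 2 ^ n"
    and comm_sub: "commutator_subgroup G \<subseteq> frattini G" and x: "x \<in> carrier G"
  shows "x \<otimes> x \<in> frattini G"
proof -
  have "x \<otimes> x \<in> M" if M: "maximal_subgroup G M" for M
  proof -
    have sub: "subgroup M G" using M by (simp add: maximal_subgroup_def)
    have "commutator_subgroup G \<subseteq> M" using comm_sub M by (auto simp: frattini_def)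
    then have "M \<lhd> G"
      using normal_if_commutators_mem[OF sub] commutator_mem_commutator_subgroup subgroup.subset[OF sub]
      by blast
    then show ?thesis using square_mem_normal_maximal[OF fin card_G M _ x] by blast
  qed
  then show ?thesis using x by (simp add: frattini_def)
qed

lemma commutator_subgroup_trivial_if_abelian:
  assumes "\<And>x y. x \<in> carrier G \<Longrightarrow> y \<in> carrier G \<Longrightarrow> x \<otimes> y = y \<otimes> x"
  shows "commutator_subgroup G = {\<one>}"
proof -
  have "x \<otimes> y \<otimes> inv x \<otimes> inv y = \<one>" if "x \<in> carrier G" "y \<in> carrier G" for x y
  proof -
    have "y \<otimes> x \<otimes> inv x = y" using that by (simp add: m_assoc)
    then show ?thesis using assms that by simp
  qed
  then have "derived_set G (carrier G) \<subseteq> {\<one>}" by auto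
  then have "commutator_subgroup G \<subseteq> {\<one>}"
    unfolding commutator_subgroup_def derived_def using generate_subgroup_incl[OF _ triv_subgroup] by blast
  then show ?thesis
    using subgroup.one_closed[OF derived_is_subgroup[OF subset_refl]] by (auto simp: commutator_subgroup_def)
qed

lemma commutator_subgroup_two_elements:
  assumes fin: "finite (carrier G)" and two: "card (commutator_subgroup G) = 2"
  obtains z where "commutator_subgroup G = {\<one>, z}" "z \<noteq> \<one>"
proof -
  let ?D = "commutator_subgroup G"
  have D: "subgroup ?D G" unfolding commutator_subgroup_def by (rule derived_is_subgroup) simp
  obtain a b where ab: "?D = {a, b}" "a \<noteq> b" using two card_2_iff by metis
  then obtain z where z: "z \<in> ?D" "z \<noteq> \<one>" by blast
  have "{\<one>, z} \<subseteq> ?D" using subgroup.one_closed[OF D] z(1) by blast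
  moreover have "card {\<one>, z} = card ?D" using z(2) two by simp
  ultimately have "?D = {\<one>, z}" using ab by (metis card_subset_eq finite.emptyI finite.insertI)
  then show ?thesis using that z(2) by blast
qed

lemma commute_cases_commutator_subgroup:
  assumes D: "commutator_subgroup G = {\<one>, z}" and x: "x \<in> carrier G" and y: "y \<in> carrier G"
  shows "x \<otimes> y = y \<otimes> x \<or> x \<otimes> y = z \<otimes> (y \<otimes> x)"
proof -
  let ?c = "x \<otimes> y \<otimes> inv x \<otimes> inv y"
  have "?c \<in> commutator_subgroup G" using commutator_mem_commutator_subgroup[OF x y] .
  moreover have "inv y \<otimes> (y \<otimes> x) = x" using x y by (simp add: m_assoc[symmetric])
  then have "x \<otimes> y = ?c \<otimes> (y \<otimes> x)" using x y by (simp add: m_assoc)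
  ultimately show ?thesis using D x y by auto
qed

lemma noncentral_square_root:
  assumes z: "z \<in> carrier G" "z \<noteq> \<one>" "z \<otimes> z = \<one>" and central: "\<And>x. x \<in> carrier G \<Longrightarrow> z \<otimes> x = x \<otimes> z"
    and squares: "\<And>x. x \<in> carrier G \<Longrightarrow> x \<otimes> x = \<one> \<or> x \<otimes> x = z"
    and x: "x \<in> carrier G" and y: "y \<in> carrier G" and xy: "x \<otimes> y = z \<otimes> (y \<otimes> x)"
  obtains r where "r \<in> carrier G" "r \<otimes> r = z" "\<exists>w\<in>carrier G. w \<otimes> r \<noteq> r \<otimes> w"
proof -
  have yx: "y \<otimes> x = z \<otimes> (x \<otimes> y)" using xy z x y by (simp add: m_assoc[symmetric])
  have ne: "x \<otimes> y \<noteq> y \<otimes> x" using xy z x y by simp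
  show ?thesis
  proof (cases "x \<otimes> x = z \<or> y \<otimes> y = z")
    case True
    then show ?thesis using that x y ne by metis
  next
    case False
    then have xx: "x \<otimes> x = \<one>" and yy: "y \<otimes> y = \<one>" using squares x y by auto
    have "(x \<otimes> y) \<otimes> (x \<otimes> y) = x \<otimes> (y \<otimes> x) \<otimes> y" using x y by (simp add: m_assoc)
    also have "\<dots> = (x \<otimes> z) \<otimes> (x \<otimes> y) \<otimes> y" using x y z by (simp only: yx) (simp add: m_assoc)
    also have "\<dots> = z \<otimes> (x \<otimes> x) \<otimes> (y \<otimes> y)"
      using x y z by (simp only: central[OF x, symmetric]) (simp add: m_assoc)
    finally have "(x \<otimes> y) \<otimes> (x \<otimes> y) = z" using xx yy z by simp
    moreover have "(x \<otimes> y) \<otimes> x = (x \<otimes> z) \<otimes> (x \<otimes> y)" using x y z yx by (simp add: m_assoc)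
    then have "(x \<otimes> y) \<otimes> x = z \<otimes> (x \<otimes> (x \<otimes> y))"
      using x y z by (simp only: central[OF x, symmetric]) (simp add: m_assoc)
    then have "(x \<otimes> y) \<otimes> x \<noteq> x \<otimes> (x \<otimes> y)" using z x y by simp
    ultimately show ?thesis using that x y by (metis m_closed)
  qed
qed

end

section \<open>Subgroups of an elementary abelian section\<close>

context group
begin

text \<open>\<open>P\<close> is an elementary abelian 2-group modulo \<open>Z\<close>, i.e. an \<open>\<int>/2\<close>-vector space; \<open>Z\<close> need not
  be normal in \<open>G\<close>, so this is phrased without quotient groups.\<close>

definition elementary_over :: "'a set \<Rightarrow> 'a set \<Rightarrow> bool" where
  "elementary_over P Z \<longleftrightarrow> subgroup P G \<and> subgroup Z G \<and> Z \<subseteq> P \<and> (\<forall>x\<in>P. x \<otimes> x \<in> Z)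
     \<and> (\<forall>x\<in>P. \<forall>y\<in>P. \<exists>c\<in>Z. x \<otimes> y = y \<otimes> x \<otimes> c)"

fun span_over :: "'a set \<Rightarrow> 'a list \<Rightarrow> 'a set" where
  "span_over Z [] = Z"
| "span_over Z (x # xs) = span_over Z xs \<union> (\<otimes>) x ` span_over Z xs"

fun indep_over :: "'a set \<Rightarrow> 'a set \<Rightarrow> 'a list \<Rightarrow> bool" where
  "indep_over P Z [] \<longleftrightarrow> True"
| "indep_over P Z (x # xs) \<longleftrightarrow> x \<in> P \<and> x \<notin> span_over Z xs \<and> indep_over P Z xs"

lemma elementary_over_subgroup:
  "elementary_over P Z \<Longrightarrow> subgroup H G \<Longrightarrow> Z \<subseteq> H \<Longrightarrow> H \<subseteq> P \<Longrightarrow> elementary_over H Z"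
  unfolding elementary_over_def by blast

lemma elementary_over_enlarge:
  "elementary_over P Z \<Longrightarrow> subgroup Z' G \<Longrightarrow> Z \<subseteq> Z' \<Longrightarrow> Z' \<subseteq> P \<Longrightarrow> elementary_over P Z'"
  unfolding elementary_over_def by blast

lemma elementary_over_one:
  assumes I: "subgroup I G" and sq: "\<And>x. x \<in> I \<Longrightarrow> x \<otimes> x = \<one>"
  shows "elementary_over I {\<one>}"
  unfolding elementary_over_def
proof (intro conjI ballI I triv_subgroup)
  show "{\<one>} \<subseteq> I" using subgroup.one_closed[OF I] by blast
  show "x \<otimes> x \<in> {\<one>}" if "x \<in> I" for x using sq[OF that] by simp
  fix x y assume xy: "x \<in> I" "y \<in> I"
  have G: "x \<in> carrier G" "y \<in> carrier G" using xy I subgroup.subset by blast+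
  have "inv x = x" "inv y = y" using sq xy G inv_equality by auto
  moreover have "x \<otimes> y = inv (x \<otimes> y)"
    using sq[OF subgroup.m_closed[OF I xy]] G inv_equality[of "x \<otimes> y" "x \<otimes> y"] by simp
  ultimately have "x \<otimes> y = y \<otimes> x" using G by (simp add: inv_mult_group)
  then show "\<exists>c\<in>{\<one>}. x \<otimes> y = y \<otimes> x \<otimes> c" using G by simp
qed

lemma elementary_over_one_commute:
  assumes "elementary_over H {\<one>}" "x \<in> H" "y \<in> H"
  shows "x \<otimes> y = y \<otimes> x"
  using assms subgroup.mem_carrier unfolding elementary_over_def by fastforce

lemma subset_span_over: "Z \<subseteq> span_over Z xs"
  by (induction xs) auto

lemma set_subset_span_over: "\<one> \<in> Z \<Longrightarrow> set xs \<subseteq> carrier G \<Longrightarrow> set xs \<subseteq> span_over Z xs"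
proof (induction xs)
  case (Cons x xs)
  have "x \<otimes> \<one> \<in> span_over Z (x # xs)" using Cons.prems(1) subset_span_over by fastforce
  then show ?case using Cons by auto
qed simp

lemma span_over_subset:
  assumes "subgroup H G" "Z \<subseteq> H" "set xs \<subseteq> H"
  shows "span_over Z xs \<subseteq> H"
  using assms(3) by (induction xs) (auto simp: assms(2) intro: subgroup.m_closed[OF assms(1)])

lemma indep_over_set: "indep_over P Z xs \<Longrightarrow> set xs \<subseteq> P"
  by (induction xs) auto

lemma indep_over_mono: "indep_over P Z xs \<Longrightarrow> set xs \<subseteq> H \<Longrightarrow> indep_over H Z xs"
  by (induction xs) auto

lemma span_over_indep:
  assumes el: "elementary_over P Z" and fin: "finite P" and ind: "indep_over P Z xs"
  shows "subgroup (span_over Z xs) G" "span_over Z xs \<subseteq> P"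
    "card (span_over Z xs) = card Z * 2 ^ length xs"
proof -
  have P: "subgroup P G" and Z: "Z \<subseteq> P"
    and sq: "\<And>x. x \<in> P \<Longrightarrow> x \<otimes> x \<in> Z"
    and comm: "\<And>x y. x \<in> P \<Longrightarrow> y \<in> P \<Longrightarrow> \<exists>c\<in>Z. x \<otimes> y = y \<otimes> x \<otimes> c"
    using el unfolding elementary_over_def by auto
  have "subgroup (span_over Z xs) G \<and> span_over Z xs \<subseteq> P \<and> card (span_over Z xs) = card Z * 2 ^ length xs"
    using ind
  proof (induction xs)
    case Nil then show ?case using el by (simp add: elementary_over_def)
  next
    case (Cons x xs)
    let ?S = "span_over Z xs"
    have S: "subgroup ?S G" "?S \<subseteq> P" "card ?S = card Z * 2 ^ length xs" and x: "x \<in> P" "x \<notin> ?S"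
      using Cons by auto
    have xG: "x \<in> carrier G" using x P subgroup.subset by blast
    have ZS: "Z \<subseteq> ?S" by (rule subset_span_over)
    have swap: "\<exists>s'\<in>?S. s \<otimes> x = x \<otimes> s'" if s: "s \<in> ?S" for s
    proof -
      obtain c where c: "c \<in> Z" "s \<otimes> x = x \<otimes> s \<otimes> c" using comm[of s x] s S(2) x(1) by blast
      have "s \<otimes> c \<in> ?S" using subgroup.m_closed[OF S(1) s] c(1) ZS by blast
      moreover have "s \<otimes> x = x \<otimes> (s \<otimes> c)"
        using c s S(1) xG subgroup.subset Z P by (metis m_assoc subsetD)
      ultimately show ?thesis by blast
    qed
    have "subgroup (span_over Z (x # xs)) G"
      using subgroup_Un_lcoset[OF S(1) xG _ swap] sq[OF x(1)] ZS by auto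
    moreover have "span_over Z (x # xs) \<subseteq> P" using S(2) x(1) subgroup.m_closed[OF P] by auto
    moreover have "card (span_over Z (x # xs)) = card Z * 2 ^ length (x # xs)"
      using card_Un_lcoset[OF S(1) finite_subset[OF S(2) fin] xG x(2)] S(3) by simp
    ultimately show ?case by blast
  qed
  then show "subgroup (span_over Z xs) G" "span_over Z xs \<subseteq> P"
    "card (span_over Z xs) = card Z * 2 ^ length xs" by auto
qed

definition indep_lists :: "'a set \<Rightarrow> 'a set \<Rightarrow> nat \<Rightarrow> 'a list set" where
  "indep_lists P Z j = {xs. length xs = j \<and> indep_over P Z xs}"

definition intermediate_subgroups :: "'a set \<Rightarrow> 'a set \<Rightarrow> nat \<Rightarrow> 'a set set" where
  "intermediate_subgroups P Z j = {H. subgroup H G \<and> Z \<subseteq> H \<and> H \<subseteq> P \<and> card H = card Z * 2 ^ j}"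

lemma finite_indep_lists: "finite P \<Longrightarrow> finite (indep_lists P Z j)"
  by (rule finite_subset[of _ "{xs. set xs \<subseteq> P \<and> length xs = j}"])
     (auto simp: indep_lists_def dest: indep_over_set intro: finite_lists_length_eq)

lemma finite_intermediate_subgroups: "finite P \<Longrightarrow> finite (intermediate_subgroups P Z j)"
  by (rule finite_subset[of _ "Pow P"]) (auto simp: intermediate_subgroups_def)

lemma card_indep_lists:
  assumes el: "elementary_over P Z" and fin: "finite P"
  shows "card (indep_lists P Z j) = (\<Prod>i<j. card P - card Z * 2 ^ i)"
proof (induction j)
  case 0
  have "indep_lists P Z 0 = {[]}" by (auto simp: indep_lists_def)
  then show ?case by simp
next
  case (Suc j)
  have split: "indep_lists P Z (Suc j) = (\<Union>xs\<in>indep_lists P Z j. (\<lambda>x. x # xs) ` (P - span_over Z xs))"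
    by (auto simp: indep_lists_def length_Suc_conv)
  have card_ext: "card ((\<lambda>x. x # xs) ` (P - span_over Z xs)) = card P - card Z * 2 ^ j"
    if xs: "xs \<in> indep_lists P Z j" for xs
  proof -
    have ind: "indep_over P Z xs" "length xs = j" using xs by (auto simp: indep_lists_def)
    note span = span_over_indep[OF el fin ind(1)]
    have "card ((\<lambda>x. x # xs) ` (P - span_over Z xs)) = card (P - span_over Z xs)"
      by (rule card_image) (auto simp: inj_on_def)
    also have "\<dots> = card P - card (span_over Z xs)"
      using card_Diff_subset[OF finite_subset[OF span(2) fin] span(2)] .
    finally show ?thesis using span(3) ind(2) by simp
  qed
  have "card (indep_lists P Z (Suc j)) = (\<Sum>xs\<in>indep_lists P Z j. card ((\<lambda>x. x # xs) ` (P - span_over Z xs)))"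
    unfolding split by (rule card_UN_disjoint) (auto simp: finite_indep_lists fin)
  also have "\<dots> = card (indep_lists P Z j) * (card P - card Z * 2 ^ j)" using card_ext by simp
  finally show ?case using Suc by simp
qed

lemma indep_lists_UN_intermediate:
  assumes el: "elementary_over P Z" and fin: "finite P"
  shows "indep_lists P Z j = (\<Union>H\<in>intermediate_subgroups P Z j. indep_lists H Z j)"
proof
  show "indep_lists P Z j \<subseteq> (\<Union>H\<in>intermediate_subgroups P Z j. indep_lists H Z j)"
  proof
    fix xs assume "xs \<in> indep_lists P Z j"
    then have ind: "indep_over P Z xs" "length xs = j" by (auto simp: indep_lists_def)
    have one: "\<one> \<in> Z" and PG: "P \<subseteq> carrier G"
      using el subgroup.one_closed subgroup.subset unfolding elementary_over_def by blast+
    note span = span_over_indep[OF el fin ind(1)]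
    have "span_over Z xs \<in> intermediate_subgroups P Z j"
      using span ind subset_span_over by (auto simp: intermediate_subgroups_def)
    moreover have "xs \<in> indep_lists (span_over Z xs) Z j"
      using indep_over_mono[OF ind(1) set_subset_span_over[OF one]] indep_over_set[OF ind(1)] PG ind(2)
      by (auto simp: indep_lists_def)
    ultimately show "xs \<in> (\<Union>H\<in>intermediate_subgroups P Z j. indep_lists H Z j)" by blast
  qed
  show "(\<Union>H\<in>intermediate_subgroups P Z j. indep_lists H Z j) \<subseteq> indep_lists P Z j"
    by (auto simp: indep_lists_def intermediate_subgroups_def) (meson indep_over_mono indep_over_set order_trans)
qed

text \<open>Double counting: every independent list spans exactly one intermediate subgroup.\<close>

lemma card_indep_lists_intermediate:
  assumes el: "elementary_over P Z" and fin: "finite P"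
  shows "card (indep_lists P Z j)
    = card (intermediate_subgroups P Z j) * (\<Prod>i<j. card Z * 2 ^ j - card Z * 2 ^ i)"
proof -
  have el_H: "elementary_over H Z" and fin_H: "finite H" and card_H: "card H = card Z * 2 ^ j"
    if "H \<in> intermediate_subgroups P Z j" for H
    using that elementary_over_subgroup[OF el] finite_subset[OF _ fin]
    by (auto simp: intermediate_subgroups_def)
  have spans: "span_over Z xs = H" if H: "H \<in> intermediate_subgroups P Z j" and xs: "xs \<in> indep_lists H Z j" for H xs
  proof -
    have ind: "indep_over H Z xs" "length xs = j" using xs by (auto simp: indep_lists_def)
    note span = span_over_indep[OF el_H[OF H] fin_H[OF H] ind(1)]
    show ?thesis using card_subset_eq[OF fin_H[OF H] span(2)] span(3) card_H[OF H] ind(2) by simp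
  qed
  have "card (indep_lists P Z j) = (\<Sum>H\<in>intermediate_subgroups P Z j. card (indep_lists H Z j))"
    unfolding indep_lists_UN_intermediate[OF el fin]
  proof (rule card_UN_disjoint)
    show "finite (intermediate_subgroups P Z j)" using fin by (rule finite_intermediate_subgroups)
    show "\<forall>H\<in>intermediate_subgroups P Z j. finite (indep_lists H Z j)"
      using fin_H finite_indep_lists by blast
    show "\<forall>H\<in>intermediate_subgroups P Z j. \<forall>H'\<in>intermediate_subgroups P Z j.
        H \<noteq> H' \<longrightarrow> indep_lists H Z j \<inter> indep_lists H' Z j = {}"
      using spans by blast
  qed
  also have "\<dots> = (\<Sum>H\<in>intermediate_subgroups P Z j. \<Prod>i<j. card Z * 2 ^ j - card Z * 2 ^ i)"
    using card_indep_lists[OF el_H fin_H] card_H by simp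
  finally show ?thesis by simp
qed

lemma exists_basis:
  assumes el: "elementary_over P Z" and fin: "finite P" and card_P: "card P = card Z * 2 ^ j"
  obtains ws where "indep_over P Z ws" "length ws = j" "span_over Z ws = P"
proof -
  have "card Z > 0"
    using el subgroup.one_closed finite_subset[OF _ fin] card_gt_0_iff
    unfolding elementary_over_def by blast
  then have "card (indep_lists P Z j) > 0"
    using card_indep_lists[OF el fin] card_P
    by (auto intro!: prod_pos simp: power_strict_increasing_iff)
  then obtain ws where ws: "ws \<in> indep_lists P Z j" by (metis card.empty ex_in_conv less_irrefl)
  then have ind: "indep_over P Z ws" "length ws = j" by (auto simp: indep_lists_def)
  note span = span_over_indep[OF el fin ind(1)]
  have "span_over Z ws = P" using card_subset_eq[OF fin span(2)] span(3) ind(2) card_P by simp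
  then show ?thesis using that ind by blast
qed

lemma indep_over_map:
  assumes el: "elementary_over P Z" and fin: "finite P" and Z': "Z' \<subseteq> Z"
    and ind: "indep_over P Z ws" and f: "\<And>w. w \<in> set ws \<Longrightarrow> f w \<in> Q \<and> (\<exists>c\<in>Z. f w = w \<otimes> c)"
  shows "indep_over Q Z' (map f ws)"
  using ind f
proof (induction ws)
  case (Cons w ws)
  have ind: "indep_over P Z ws" "w \<in> P" "w \<notin> span_over Z ws" using Cons.prems(1) by auto
  obtain c where c: "c \<in> Z" "f w = w \<otimes> c" "f w \<in> Q" using Cons.prems(2)[of w] by auto
  note span = span_over_indep[OF el fin ind(1)]
  have PG: "P \<subseteq> carrier G" and ZG: "subgroup Z G"
    using el subgroup.subset unfolding elementary_over_def by blast+
  have ZS: "Z \<subseteq> span_over Z ws" by (rule subset_span_over)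
  have wsS: "set ws \<subseteq> span_over Z ws"
    using set_subset_span_over[OF subgroup.one_closed[OF ZG]] indep_over_set[OF ind(1)] PG by blast
  have "f v \<in> span_over Z ws" if v: "v \<in> set ws" for v
  proof -
    obtain c' where "c' \<in> Z" "f v = v \<otimes> c'" using Cons.prems(2)[of v] v by auto
    then show ?thesis using subgroup.m_closed[OF span(1)] wsS ZS v by auto
  qed
  then have sub: "span_over Z' (map f ws) \<subseteq> span_over Z ws"
    using span_over_subset[OF span(1), of Z' "map f ws"] Z' ZS by auto
  have "f w \<notin> span_over Z' (map f ws)"
  proof
    assume "f w \<in> span_over Z' (map f ws)"
    then have "f w \<otimes> inv c \<in> span_over Z ws"
      using sub c(1) ZS subgroup.m_closed[OF span(1)] subgroup.m_inv_closed[OF span(1)] by blast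
    moreover have "f w \<otimes> inv c = w" using c ind(2) PG subgroup.mem_carrier[OF ZG] by (auto simp: m_assoc)
    ultimately show False using ind(3) by simp
  qed
  then show ?case using Cons c(3) by auto
qed simp

end

text \<open>The Gaussian binomial coefficient \<open>[d, k]\<^sub>2\<close>, the number of \<open>k\<close>-dimensional subspaces
  of \<open>\<int>/2\<^sup>d\<close>, through its \<open>q\<close>-Pascal recurrence.\<close>

fun gbinom2 :: "nat \<Rightarrow> nat \<Rightarrow> nat" where
  "gbinom2 d 0 = 1"
| "gbinom2 0 (Suc k) = 0"
| "gbinom2 (Suc d) (Suc k) = gbinom2 d k + 2 ^ Suc k * gbinom2 d (Suc k)"

definition indep_tuples2 :: "nat \<Rightarrow> nat \<Rightarrow> nat" where
  "indep_tuples2 d j = (\<Prod>i<j. 2 ^ d - 2 ^ i)"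

lemma indep_tuples2_diag_pos: "indep_tuples2 j j > 0"
  unfolding indep_tuples2_def by (auto intro!: prod_pos simp: power_strict_increasing_iff)

lemma indep_tuples2_Suc: "indep_tuples2 d (Suc k) = indep_tuples2 d k * (2 ^ d - 2 ^ k)"
  by (simp add: indep_tuples2_def)

lemma indep_tuples2_Suc_Suc: "indep_tuples2 (Suc d) (Suc k) = (2 ^ Suc d - 1) * 2 ^ k * indep_tuples2 d k"
proof -
  have "indep_tuples2 (Suc d) (Suc k) = (2 ^ Suc d - 2 ^ 0) * (\<Prod>i<k. 2 ^ Suc d - 2 ^ Suc i)"
    unfolding indep_tuples2_def by (rule prod.lessThan_Suc_shift)
  also have "(\<Prod>i<k. 2 ^ Suc d - 2 ^ Suc i) = (\<Prod>i<k. 2 * (2 ^ d - 2 ^ i :: nat))"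
    by (rule prod.cong) (auto simp: right_diff_distrib')
  also have "\<dots> = 2 ^ k * indep_tuples2 d k" by (simp add: indep_tuples2_def prod.distrib)
  finally show ?thesis by simp
qed

lemma indep_tuples2_eq_0: "d < k \<Longrightarrow> indep_tuples2 d k = 0"
  unfolding indep_tuples2_def by (rule prod_zero) auto

lemma indep_tuples2_gbinom2: "indep_tuples2 d j = gbinom2 d j * indep_tuples2 j j"
proof (induction d arbitrary: j)
  case 0
  then show ?case by (cases j) (simp_all add: indep_tuples2_def)
next
  case (Suc d)
  show ?case
  proof (cases j)
    case (Suc k)
    have "(2 ^ Suc d - 1) * 2 ^ k * indep_tuples2 d k
        = (2 ^ Suc k - 1) * 2 ^ k * indep_tuples2 d k + 2 ^ Suc k * indep_tuples2 d (Suc k)"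
    proof (cases "k \<le> d")
      case True
      have arith: "(2 * B - 1) * A * P = (2 * A - 1) * A * P + 2 * A * (P * (B - A))"
        if "A \<le> B" "1 \<le> A" for A B P :: nat
        by (rule of_nat_eq_iff[where 'a=int, THEN iffD1]) (use that in \<open>simp add: of_nat_diff algebra_simps\<close>)
      show ?thesis
        using arith[of "2 ^ k" "2 ^ d" "indep_tuples2 d k"] True
        by (simp add: indep_tuples2_Suc power_increasing mult.assoc)
    qed (simp add: indep_tuples2_eq_0)
    then show ?thesis
      using Suc.IH[of k] Suc.IH[of "Suc k"] \<open>j = Suc k\<close>
      by (simp add: indep_tuples2_Suc_Suc algebra_simps)
  qed (simp add: indep_tuples2_def)
qed

context group
begin

lemma card_intermediate_subgroups:
  assumes el: "elementary_over P Z" and fin: "finite P" and card_P: "card P = card Z * 2 ^ d"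
  shows "card (intermediate_subgroups P Z j) = gbinom2 d j"
proof -
  have "card Z > 0"
    using el subgroup.one_closed finite_subset[OF _ fin] card_gt_0_iff
    unfolding elementary_over_def by blast
  have scale: "(\<Prod>i<j. card Z * 2 ^ a - card Z * 2 ^ i) = card Z ^ j * indep_tuples2 a j" for a
    by (simp add: indep_tuples2_def right_diff_distrib'[symmetric] prod.distrib)
  have "card (intermediate_subgroups P Z j) * (card Z ^ j * indep_tuples2 j j)
      = card (indep_lists P Z j)"
    using card_indep_lists_intermediate[OF el fin, of j] scale[of j] by simp
  also have "\<dots> = gbinom2 d j * (card Z ^ j * indep_tuples2 j j)"
    using card_indep_lists[OF el fin, of j] card_P scale[of d] indep_tuples2_gbinom2[of d j] by simp
  finally show ?thesis using \<open>card Z > 0\<close> indep_tuples2_diag_pos[of j] by simp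
qed

lemma complement_mem_cases:
  assumes el: "elementary_over I {\<one>}" and fin: "finite I" and z: "z \<in> I"
    and H: "subgroup H G" "H \<subseteq> I" "z \<notin> H" "card I = 2 * card H" and w: "w \<in> I"
  shows "w \<in> H \<or> w \<otimes> z \<in> H"
proof -
  have I: "subgroup I G" using el by (simp add: elementary_over_def)
  have IG: "I \<subseteq> carrier G" and zG: "z \<in> carrier G" using I subgroup.subset z by blast+
  have zz: "z \<otimes> z = \<one>" using el z by (simp add: elementary_over_def)
  have z_ne: "z \<noteq> \<one>" using H(3) subgroup.one_closed[OF H(1)] by blast
  have Z: "subgroup {\<one>, z} G" by (rule subgroup_involution[OF zG zz])
  have "{\<one>, z} \<inter> H = {\<one>}" using H(3) subgroup.one_closed[OF H(1)] by auto
  then have "card ({\<one>, z} <#> H) = card I"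
    using card_set_mult_inter_one[OF Z H(1)] finite_subset[OF H(2) fin] H(4) z_ne by simp
  moreover have "{\<one>, z} <#> H \<subseteq> I"
    using H(2) z subgroup.m_closed[OF I] subgroup.one_closed[OF I] by (auto simp: set_mult_def)
  ultimately have "{\<one>, z} <#> H = I" using card_subset_eq[OF fin] by blast
  then obtain c h where ch: "c \<in> {\<one>, z}" "h \<in> H" "w = c \<otimes> h" using w unfolding set_mult_def by blast
  have hI: "h \<in> I" using ch(2) H(2) by blast
  show ?thesis
  proof (cases "c = \<one>")
    case True then show ?thesis using ch hI IG by auto
  next
    case False
    then have "w \<otimes> z = (h \<otimes> z) \<otimes> z" using ch elementary_over_one_commute[OF el z hI] by simp
    also have "\<dots> = h" using zz hI IG zG by (simp add: m_assoc subset_iff)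
    finally show ?thesis using ch(2) by simp
  qed
qed

text \<open>A complement \<open>H\<close> of \<open>{\<one>, z}\<close> in \<open>I\<close> contains exactly one of \<open>w\<close>, \<open>w \<otimes> z\<close> for each vector
  \<open>w\<close> of a basis of \<open>I\<close> modulo \<open>{\<one>, z}\<close>, and these choices span \<open>H\<close>; so \<open>H\<close> is determined by a
  bit vector of length \<open>j\<close>.\<close>

lemma card_complements_le:
  assumes el: "elementary_over I {\<one>}" and fin: "finite I" and z: "z \<in> I"
    and card_I: "card I = 2 ^ Suc j"
  shows "card {H. subgroup H G \<and> H \<subseteq> I \<and> card H = 2 ^ j \<and> z \<notin> H} \<le> 2 ^ j"
    (is "card ?Cpl \<le> _")
proof (cases "z = \<one>")
  case True
  then have "?Cpl = {}" using subgroup.one_closed by blast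
  then show ?thesis by (metis card.empty le0)
next
  case z_ne: False
  have I: "subgroup I G" and zz: "z \<otimes> z = \<one>" using el z by (auto simp: elementary_over_def)
  have Z: "subgroup {\<one>, z} G" using subgroup_involution[OF subgroup.mem_carrier[OF I z] zz] .
  have "card I = card {\<one>, z} * 2 ^ j" using card_I z_ne by simp
  then obtain ws where ws: "indep_over I {\<one>, z} ws" "length ws = j"
    using exists_basis[OF elementary_over_enlarge[OF el Z] fin] z subgroup.one_closed[OF I] by auto
  define pick where "pick H w = (if w \<in> H then w else w \<otimes> z)" for H w
  have span_pick: "span_over {\<one>} (map (pick H) ws) = H" if H: "H \<in> ?Cpl" for H
  proof -
    have HI: "H \<subseteq> I" and sub: "subgroup H G" and fin_H: "finite H" and card_H: "card H = 2 ^ j"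
      using H finite_subset[OF _ fin] by auto
    have "pick H w \<in> H \<and> (\<exists>c\<in>{\<one>, z}. pick H w = w \<otimes> c)" if w: "w \<in> I" for w
      using complement_mem_cases[OF el fin z sub HI _ _ w] H card_I w subgroup.mem_carrier[OF I]
      by (auto simp: pick_def)
    then have "indep_over H {\<one>} (map (pick H) ws)"
      using indep_over_map[OF elementary_over_enlarge[OF el Z] fin _ ws(1)] indep_over_set[OF ws(1)]
        z subgroup.one_closed[OF I] by blast
    note span = span_over_indep[OF elementary_over_subgroup[OF el sub _ HI] fin_H this]
    show ?thesis using card_subset_eq[OF fin_H span(2)] span(3) card_H ws(2) subgroup.one_closed[OF sub]
      by simp
  qed
  have "inj_on (\<lambda>H. map (\<lambda>w. w \<in> H) ws) ?Cpl"
  proof (rule inj_onI)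
    fix H H' assume H: "H \<in> ?Cpl" and H': "H' \<in> ?Cpl" and "map (\<lambda>w. w \<in> H) ws = map (\<lambda>w. w \<in> H') ws"
    then have "map (pick H) ws = map (pick H') ws" by (simp add: pick_def)
    then show "H = H'" using span_pick[OF H] span_pick[OF H'] by metis
  qed
  then have "card ?Cpl = card ((\<lambda>H. map (\<lambda>w. w \<in> H) ws) ` ?Cpl)" by (simp add: card_image)
  also have "\<dots> \<le> card {bs :: bool list. set bs \<subseteq> UNIV \<and> length bs = j}"
    by (rule card_mono) (use finite_lists_length_eq[of "UNIV :: bool set" j] ws(2) in auto)
  also have "\<dots> = 2 ^ j" using card_lists_length_eq[of "UNIV :: bool set" j] by simp
  finally show ?thesis .
qed

end

section \<open>Groups whose commutator and Frattini subgroups coincide and have order 2\<close>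

text \<open>What the counting uses of a 2-group with \<open>G' = \<Phi>(G) = {\<one>, z}\<close>; the element \<open>r\<close> plays
  the part of a rotation of order 4 in a factor \<open>D\<^sub>8\<close>.\<close>

locale extraspecial_like = group G for G (structure) +
  fixes z r :: 'a and n :: nat
  assumes finite_carrier: "finite (carrier G)" and card_carrier: "card (carrier G) = 2 ^ n"
    and n_ge_3: "3 \<le> n"
    and z_carrier: "z \<in> carrier G" and z_ne_one: "z \<noteq> \<one>"
    and z_central: "\<And>x. x \<in> carrier G \<Longrightarrow> z \<otimes> x = x \<otimes> z"
    and square_cases: "\<And>x. x \<in> carrier G \<Longrightarrow> x \<otimes> x = \<one> \<or> x \<otimes> x = z"
    and commute_cases: "\<And>x y. x \<in> carrier G \<Longrightarrow> y \<in> carrier G \<Longrightarrow> x \<otimes> y = y \<otimes> x \<or> x \<otimes> y = y \<otimes> x \<otimes> z"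
    and r_carrier: "r \<in> carrier G" and r_square: "r \<otimes> r = z"
    and r_noncentral: "\<exists>y\<in>carrier G. y \<otimes> r \<noteq> r \<otimes> y"
begin

definition Z2 :: "'a set" where "Z2 = {\<one>, z}"

definition R4 :: "'a set" where "R4 = {\<one>, r, z, r \<otimes> z}"

definition Cr :: "'a set" where "Cr = {x \<in> carrier G. x \<otimes> r = r \<otimes> x}"

definition avoiding :: "nat \<Rightarrow> 'a set set" where
  "avoiding k = {H. subgroup H G \<and> card H = 2 ^ k \<and> z \<notin> H}"

definition avoiding_in :: "'a set \<Rightarrow> nat \<Rightarrow> 'a set set" where
  "avoiding_in Y k = {H \<in> avoiding k. H \<subseteq> Y}"

lemma z_square: "z \<otimes> z = \<one>"
  using square_cases[OF z_carrier] z_ne_one z_carrier by auto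

lemma two_pow_n_minus: "(2::nat) ^ n = 2 * 2 ^ (n - 1)" "(2::nat) ^ n = 4 * 2 ^ (n - 2)"
  "(2::nat) ^ (n - 1) = 4 * 2 ^ (n - 3)"
proof -
  obtain m where "n = 3 + m" using le_Suc_ex[OF n_ge_3] by blast
  then have "n = Suc (Suc (Suc m))" by simp
  then show "(2::nat) ^ n = 2 * 2 ^ (n - 1)" "(2::nat) ^ n = 4 * 2 ^ (n - 2)"
    "(2::nat) ^ (n - 1) = 4 * 2 ^ (n - 3)" by simp_all
qed

lemma Z2_subgroup: "subgroup Z2 G"
  unfolding Z2_def using subgroup_involution[OF z_carrier z_square] .

lemma card_Z2: "card Z2 = 2"
  using z_ne_one by (simp add: Z2_def)

lemma commutator_mem_Z2:
  assumes x: "x \<in> carrier G" and y: "y \<in> carrier G"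
  shows "x \<otimes> y \<otimes> inv x \<otimes> inv y \<in> Z2"
proof -
  have "\<exists>c\<in>Z2. x \<otimes> y = c \<otimes> (y \<otimes> x)"
  proof (cases "x \<otimes> y = y \<otimes> x")
    case True then show ?thesis using x y by (auto simp: Z2_def)
  next
    case False
    then have "x \<otimes> y = z \<otimes> (y \<otimes> x)" using commute_cases[OF x y] z_central[of "y \<otimes> x"] x y by simp
    then show ?thesis by (auto simp: Z2_def)
  qed
  then obtain c where c: "c \<in> Z2" "x \<otimes> y = c \<otimes> (y \<otimes> x)" by blast
  have cG: "c \<in> carrier G" using c(1) z_carrier by (auto simp: Z2_def)
  have "x \<otimes> y \<otimes> inv x \<otimes> inv y = c \<otimes> (y \<otimes> x \<otimes> inv x \<otimes> inv y)"
    using c(2) x y cG by (simp add: m_assoc)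
  also have "\<dots> = c" using x y cG by (simp add: m_assoc)
  finally show ?thesis using c(1) by simp
qed

lemma normal_if_Z2_subset:
  assumes "subgroup N G" "Z2 \<subseteq> N"
  shows "N \<lhd> G"
  using normal_if_commutators_mem[OF assms(1)] commutator_mem_Z2 assms subgroup.subset by blast

lemma elementary_carrier_Z2: "elementary_over (carrier G) Z2"
  unfolding elementary_over_def
proof (intro conjI ballI subgroup_self Z2_subgroup)
  show "Z2 \<subseteq> carrier G" using Z2_subgroup subgroup.subset by blast
  show "x \<otimes> x \<in> Z2" if "x \<in> carrier G" for x using square_cases[OF that] by (auto simp: Z2_def)
  show "\<exists>c\<in>Z2. x \<otimes> y = y \<otimes> x \<otimes> c" if "x \<in> carrier G" "y \<in> carrier G" for x y
    using commute_cases[OF that] that by (auto simp: Z2_def)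
qed

lemma R4_span: "R4 = span_over Z2 [r]" and indep_r: "indep_over (carrier G) Z2 [r]"
proof -
  show "R4 = span_over Z2 [r]" using r_carrier by (auto simp: R4_def Z2_def)
  have "r \<noteq> \<one>" "r \<noteq> z" using r_square z_square z_ne_one by auto
  then show "indep_over (carrier G) Z2 [r]" using r_carrier by (simp add: Z2_def)
qed

lemma R4_subgroup: "subgroup R4 G" and card_R4: "card R4 = 4"
  using span_over_indep[OF elementary_carrier_Z2 finite_carrier indep_r] card_Z2
  unfolding R4_span by simp_all

lemma Z2_subset_R4: "Z2 \<subseteq> R4"
  by (auto simp: Z2_def R4_def)

lemma R4_normal: "R4 \<lhd> G"
  by (rule normal_if_Z2_subset[OF R4_subgroup Z2_subset_R4])

lemma elementary_carrier_R4: "elementary_over (carrier G) R4"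
  using elementary_carrier_Z2 R4_subgroup Z2_subset_R4 subgroup.subset
  unfolding elementary_over_def by blast

lemma mult_mem_Cr_iff:
  assumes x: "x \<in> carrier G" and y: "y \<in> carrier G"
  shows "x \<otimes> y \<in> Cr \<longleftrightarrow> (x \<in> Cr \<longleftrightarrow> y \<in> Cr)"
proof -
  define e where "e u = (if u \<in> Cr then \<one> else z)" for u
  have e: "u \<otimes> r = r \<otimes> u \<otimes> e u" if "u \<in> carrier G" for u
    using commute_cases[OF that r_carrier] that r_carrier by (auto simp: Cr_def e_def)
  have eG: "e u \<in> carrier G" for u using z_carrier by (simp add: e_def)
  have e_central: "e u \<otimes> v = v \<otimes> e u" if "v \<in> carrier G" for u v
    using z_central[OF that] that by (simp add: e_def)
  have "(x \<otimes> y) \<otimes> r = x \<otimes> (r \<otimes> y \<otimes> e y)" using x y r_carrier e[OF y] by (simp add: m_assoc)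
  also have "\<dots> = (x \<otimes> r) \<otimes> y \<otimes> e y" using x y r_carrier eG by (simp add: m_assoc)
  also have "\<dots> = (r \<otimes> x \<otimes> e x) \<otimes> y \<otimes> e y" using e[OF x] by simp
  also have "\<dots> = r \<otimes> (x \<otimes> y) \<otimes> (e x \<otimes> e y)"
    using x y r_carrier eG e_central[OF y, of x] by (simp add: m_assoc)
  finally have "(x \<otimes> y) \<otimes> r = r \<otimes> (x \<otimes> y) \<otimes> (e x \<otimes> e y)" .
  then have "x \<otimes> y \<in> Cr \<longleftrightarrow> e x \<otimes> e y = \<one>"
    using x y r_carrier eG by (simp add: Cr_def)
  also have "\<dots> \<longleftrightarrow> (x \<in> Cr \<longleftrightarrow> y \<in> Cr)" using z_square z_ne_one z_carrier by (simp add: e_def)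
  finally show ?thesis .
qed

lemma one_mem_Cr: "\<one> \<in> Cr"
  using r_carrier by (simp add: Cr_def)

lemma Cr_subgroup: "subgroup Cr G"
proof (rule subgroupI)
  show "Cr \<subseteq> carrier G" by (auto simp: Cr_def)
  show "Cr \<noteq> {}" using one_mem_Cr by blast
  show "inv a \<in> Cr" if a: "a \<in> Cr" for a
  proof -
    have aG: "a \<in> carrier G" using a by (simp add: Cr_def)
    have "a \<otimes> inv a \<in> Cr" using one_mem_Cr aG by simp
    then show ?thesis using mult_mem_Cr_iff[OF aG inv_closed[OF aG]] a by blast
  qed
  show "a \<otimes> b \<in> Cr" if "a \<in> Cr" "b \<in> Cr" for a b
    using mult_mem_Cr_iff[of a b] that by (simp add: Cr_def)
qed

lemma R4_subset_Cr: "R4 \<subseteq> Cr"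
proof -
  have "r \<in> Cr" "z \<in> Cr" using r_carrier z_carrier z_central[OF r_carrier] by (simp_all add: Cr_def)
  then show ?thesis using subgroup.m_closed[OF Cr_subgroup] one_mem_Cr by (simp add: R4_def)
qed

lemma finite_Cr: "finite Cr"
  using finite_carrier by (rule finite_subset[rotated]) (auto simp: Cr_def)

lemma elementary_Cr_R4: "elementary_over Cr R4"
  by (rule elementary_over_subgroup[OF elementary_carrier_R4 Cr_subgroup R4_subset_Cr])
     (auto simp: Cr_def)

text \<open>\<open>Cr\<close> has index 2 because \<open>x \<mapsto> [x, r]\<close> is a homomorphism onto \<open>{\<one>, z}\<close>.\<close>

lemma Cr_index_two:
  assumes S: "subgroup S G" "finite S" and s: "s \<in> S" "s \<notin> Cr"
  shows "S = (S \<inter> Cr) \<union> (\<otimes>) s ` (S \<inter> Cr)" "card S = 2 * card (S \<inter> Cr)"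
proof -
  have SG: "S \<subseteq> carrier G" using S subgroup.subset by blast
  have sG: "s \<in> carrier G" using s SG by blast
  show split: "S = (S \<inter> Cr) \<union> (\<otimes>) s ` (S \<inter> Cr)"
  proof
    show "S \<subseteq> (S \<inter> Cr) \<union> (\<otimes>) s ` (S \<inter> Cr)"
    proof
      fix x assume x: "x \<in> S"
      have xG: "x \<in> carrier G" using x SG by blast
      have "x \<notin> Cr \<Longrightarrow> inv s \<otimes> x \<in> Cr"
        using mult_mem_Cr_iff[OF inv_closed[OF sG] xG] mult_mem_Cr_iff[OF sG inv_closed[OF sG]]
          one_mem_Cr s(2) sG by auto
      moreover have "inv s \<otimes> x \<in> S" using subgroup.m_closed subgroup.m_inv_closed S(1) s(1) x by metis
      moreover have "x = s \<otimes> (inv s \<otimes> x)" using sG xG by (simp add: m_assoc[symmetric])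
      ultimately show "x \<in> (S \<inter> Cr) \<union> (\<otimes>) s ` (S \<inter> Cr)" using x by blast
    qed
    show "(S \<inter> Cr) \<union> (\<otimes>) s ` (S \<inter> Cr) \<subseteq> S" using subgroup.m_closed[OF S(1)] s by auto
  qed
  have "subgroup (S \<inter> Cr) G" using subgroups_Inter_pair[OF S(1) Cr_subgroup] .
  then show "card S = 2 * card (S \<inter> Cr)"
    using card_Un_lcoset[of "S \<inter> Cr" s] S(2) sG s(2) split by simp
qed

lemma card_Cr: "card Cr = 2 ^ (n - 1)"
proof -
  obtain y where y: "y \<in> carrier G" "y \<otimes> r \<noteq> r \<otimes> y" using r_noncentral by blast
  then have "card (carrier G) = 2 * card (carrier G \<inter> Cr)"
    using Cr_index_two(2)[OF subgroup_self finite_carrier y(1)] by (simp add: Cr_def)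
  moreover have "carrier G \<inter> Cr = Cr" by (auto simp: Cr_def)
  ultimately show ?thesis using card_carrier two_pow_n_minus(1) by simp
qed

lemma card_subgroups_containing_z:
  "card {H. subgroup H G \<and> card H = 2 ^ Suc j \<and> z \<in> H} = gbinom2 (n - 1) j"
proof -
  have "{H. subgroup H G \<and> card H = 2 ^ Suc j \<and> z \<in> H} = intermediate_subgroups (carrier G) Z2 j"
    using card_Z2 subgroup.one_closed subgroup.subset by (fastforce simp: intermediate_subgroups_def Z2_def)
  moreover have "card (carrier G) = card Z2 * 2 ^ (n - 1)" using card_carrier card_Z2 two_pow_n_minus by simp
  ultimately show ?thesis
    using card_intermediate_subgroups[OF elementary_carrier_Z2 finite_carrier] by simp
qed

lemma card_intermediate_R4: "card (intermediate_subgroups (carrier G) R4 k) = gbinom2 (n - 2) k"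
  using card_intermediate_subgroups[OF elementary_carrier_R4 finite_carrier] card_carrier card_R4
    two_pow_n_minus by simp

lemma card_intermediate_Cr_R4: "card (intermediate_subgroups Cr R4 k) = gbinom2 (n - 3) k"
  using card_intermediate_subgroups[OF elementary_Cr_R4 finite_Cr] card_Cr card_R4 two_pow_n_minus by simp

lemma avoidingD:
  assumes "H \<in> avoiding k"
  shows "subgroup H G" "card H = 2 ^ k" "z \<notin> H" "H \<subseteq> carrier G" "finite H"
  using assms finite_subset[OF _ finite_carrier] subgroup.subset by (auto simp: avoiding_def)

lemma finite_avoiding: "finite (avoiding k)"
  using avoidingD(4) by (intro finite_subset[OF _ finite_Pow_iff[THEN iffD2, OF finite_carrier]]) blast

lemma finite_avoiding_in: "finite (avoiding_in Y k)"
  using finite_avoiding[of k] by (rule finite_subset[rotated]) (auto simp: avoiding_in_def)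

lemma avoiding_square:
  assumes H: "H \<in> avoiding k" and h: "h \<in> H"
  shows "h \<otimes> h = \<one>"
  using square_cases[of h] subgroup.m_closed[OF avoidingD(1)[OF H] h h] avoidingD[OF H] h by auto

lemma elementary_avoiding: "H \<in> avoiding k \<Longrightarrow> elementary_over H {\<one>}"
  using elementary_over_one avoidingD(1) avoiding_square by blast

lemma R4_inter_avoiding: "H \<in> avoiding k \<Longrightarrow> R4 \<inter> H = {\<one>}"
proof -
  assume H: "H \<in> avoiding k"
  have "(r \<otimes> z) \<otimes> (r \<otimes> z) = (r \<otimes> r) \<otimes> (z \<otimes> z)"
    using square_mult_commuting[OF r_carrier z_carrier] z_central[OF r_carrier] by simp
  then have "(r \<otimes> z) \<otimes> (r \<otimes> z) = z" using r_square z_square z_carrier by simp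
  then have "r \<notin> H" "r \<otimes> z \<notin> H" using avoiding_square[OF H] r_square z_ne_one by metis+
  then show ?thesis using avoidingD(3)[OF H] subgroup.one_closed[OF avoidingD(1)[OF H]] by (auto simp: R4_def)
qed

lemma Z2_mult_avoiding:
  assumes H: "H \<in> avoiding k"
  shows "subgroup (Z2 <#> H) G" "card (Z2 <#> H) = 2 ^ Suc k" "H \<subseteq> Z2 <#> H"
proof -
  note H = avoidingD[OF H]
  show "subgroup (Z2 <#> H) G"
    using mult_norm_subgroup[OF normal_if_Z2_subset[OF Z2_subgroup] H(1)] by simp
  have "Z2 \<inter> H = {\<one>}" using H(3) subgroup.one_closed[OF H(1)] by (auto simp: Z2_def)
  then show "card (Z2 <#> H) = 2 ^ Suc k"
    using card_set_mult_inter_one[OF Z2_subgroup H(1) _ H(5)] card_Z2 H(2) by (simp add: Z2_def)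
  show "H \<subseteq> Z2 <#> H" using set_mult_subgroups_supset[OF Z2_subgroup H(1)] by blast
qed

lemma R4_mult_avoiding:
  assumes H: "H \<in> avoiding k"
  shows "R4 <#> H \<in> intermediate_subgroups (carrier G) R4 k" "H \<subseteq> R4 <#> H"
proof -
  note H' = avoidingD[OF H]
  have sub: "subgroup (R4 <#> H) G" using mult_norm_subgroup[OF R4_normal H'(1)] .
  have "card (R4 <#> H) = card R4 * 2 ^ k"
    using card_set_mult_inter_one[OF R4_subgroup H'(1) _ H'(5) R4_inter_avoiding[OF H]] card_R4 H'(2)
    by (simp add: R4_def)
  then show "R4 <#> H \<in> intermediate_subgroups (carrier G) R4 k"
    using sub set_mult_subgroups_supset[OF R4_subgroup H'(1)] subgroup.subset[OF sub]
    by (auto simp: intermediate_subgroups_def)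
  show "H \<subseteq> R4 <#> H" using set_mult_subgroups_supset[OF R4_subgroup H'(1)] by blast
qed

text \<open>Inside the centralizer of \<open>r\<close>, multiplication by \<open>r\<close> turns involutions into square roots
  of \<open>z\<close>, so at most half of the elements square to \<open>\<one>\<close>.\<close>

lemma card_involutions_le:
  assumes Y: "subgroup Y G" "r \<in> Y" "Y \<subseteq> Cr" "finite Y"
  shows "2 * card {x \<in> Y. x \<otimes> x = \<one>} \<le> card Y"
proof -
  let ?I = "{x \<in> Y. x \<otimes> x = \<one>}"
  have YG: "Y \<subseteq> carrier G" using Y(1) subgroup.subset by blast
  have square: "(x \<otimes> r) \<otimes> (x \<otimes> r) = z" if x: "x \<in> ?I" for x
  proof -
    have xG: "x \<in> carrier G" and xr: "x \<otimes> r = r \<otimes> x" using x Y(3) by (auto simp: Cr_def)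
    show ?thesis using square_mult_commuting[OF xG r_carrier xr] x r_square z_carrier by simp
  qed
  have fin_I: "finite ?I" using Y(4) by simp
  have "?I \<inter> (\<lambda>x. x \<otimes> r) ` ?I = {}" using square z_ne_one by fastforce
  then have "card (?I \<union> (\<lambda>x. x \<otimes> r) ` ?I) = card ?I + card ((\<lambda>x. x \<otimes> r) ` ?I)"
    using fin_I by (simp add: card_Un_disjoint)
  also have "card ((\<lambda>x. x \<otimes> r) ` ?I) = card ?I"
    using YG r_carrier by (intro card_image) (auto simp: inj_on_def subset_iff)
  finally have "card (?I \<union> (\<lambda>x. x \<otimes> r) ` ?I) = 2 * card ?I" by simp
  moreover have "?I \<union> (\<lambda>x. x \<otimes> r) ` ?I \<subseteq> Y" using subgroup.m_closed[OF Y(1)] Y(2) by auto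
  ultimately show ?thesis using card_mono[OF Y(4), of "?I \<union> (\<lambda>x. x \<otimes> r) ` ?I"] by simp
qed

lemma Z2_mult_avoiding_in_Cr:
  assumes Y: "Y \<in> intermediate_subgroups Cr R4 j" and H: "H \<in> avoiding_in Y j"
  shows "Z2 <#> H = {x \<in> Y. x \<otimes> x = \<one>}"
proof -
  have Y: "subgroup Y G" "R4 \<subseteq> Y" "Y \<subseteq> Cr" "card Y = 4 * 2 ^ j"
    using Y card_R4 by (auto simp: intermediate_subgroups_def)
  have fin_Y: "finite Y" using Y(3) finite_Cr finite_subset by blast
  have rY: "r \<in> Y" and Z2_Y: "Z2 \<subseteq> Y" using Y(2) Z2_subset_R4 by (auto simp: R4_def)
  have HA: "H \<in> avoiding j" and HY: "H \<subseteq> Y" using H by (auto simp: avoiding_in_def)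
  have "c \<otimes> h \<in> {x \<in> Y. x \<otimes> x = \<one>}" if c: "c \<in> Z2" and h: "h \<in> H" for c h
  proof -
    have cG: "c \<in> carrier G" and hG: "h \<in> carrier G"
      using c h z_carrier avoidingD(4)[OF HA] by (auto simp: Z2_def)
    have "c \<otimes> h = h \<otimes> c" using c hG z_central[OF hG] by (auto simp: Z2_def)
    then have "(c \<otimes> h) \<otimes> (c \<otimes> h) = (c \<otimes> c) \<otimes> (h \<otimes> h)" using square_mult_commuting[OF cG hG] by simp
    then have "(c \<otimes> h) \<otimes> (c \<otimes> h) = \<one>" using c z_square avoiding_square[OF HA h] by (auto simp: Z2_def)
    moreover have "c \<otimes> h \<in> Y" using subgroup.m_closed[OF Y(1)] c h Z2_Y HY by blast
    ultimately show ?thesis by simp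
  qed
  then have "Z2 <#> H \<subseteq> {x \<in> Y. x \<otimes> x = \<one>}" by (auto simp: set_mult_def)
  moreover have "card {x \<in> Y. x \<otimes> x = \<one>} \<le> card (Z2 <#> H)"
    using card_involutions_le[OF Y(1) rY Y(3) fin_Y] Y(4) Z2_mult_avoiding(2)[OF HA] by simp
  ultimately show ?thesis using fin_Y card_seteq by (metis (no_types, lifting) finite_subset mem_Collect_eq subsetI)
qed

lemma card_avoiding_in_Cr_le:
  assumes Y: "Y \<in> intermediate_subgroups Cr R4 j"
  shows "card (avoiding_in Y j) \<le> 2 ^ j"
proof (cases "avoiding_in Y j = {}")
  case False
  define I where "I = {x \<in> Y. x \<otimes> x = \<one>}"
  have Y_sub: "R4 \<subseteq> Y" "Y \<subseteq> Cr" using Y by (auto simp: intermediate_subgroups_def)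
  have fin_I: "finite I" unfolding I_def using finite_subset[OF Y_sub(2) finite_Cr] by simp
  obtain H0 where H0: "H0 \<in> avoiding_in Y j" using False by blast
  then have H0A: "H0 \<in> avoiding j" by (simp add: avoiding_in_def)
  have I: "subgroup I G" "card I = 2 ^ Suc j"
    using Z2_mult_avoiding[OF H0A] Z2_mult_avoiding_in_Cr[OF Y H0] by (simp_all add: I_def)
  have el_I: "elementary_over I {\<one>}" using elementary_over_one[OF I(1)] by (simp add: I_def)
  have z_I: "z \<in> I" using Y_sub(1) Z2_subset_R4 z_square by (auto simp: I_def Z2_def)
  let ?Cpl = "{H. subgroup H G \<and> H \<subseteq> I \<and> card H = 2 ^ j \<and> z \<notin> H}"
  have "avoiding_in Y j \<subseteq> ?Cpl"
    using Z2_mult_avoiding_in_Cr[OF Y] Z2_mult_avoiding(3)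
    by (fastforce simp: avoiding_in_def avoiding_def I_def)
  moreover have "finite ?Cpl" by (rule finite_subset[of _ "Pow I"]) (auto simp: fin_I)
  ultimately have "card (avoiding_in Y j) \<le> card ?Cpl" by (simp add: card_mono)
  also have "\<dots> \<le> 2 ^ j" by (rule card_complements_le[OF el_I fin_I z_I I(2)])
  finally show ?thesis .
qed simp

lemma avoiding_in_meets_coset:
  assumes Y: "Y \<in> intermediate_subgroups (carrier G) R4 k" and y: "y \<in> Y" and H: "H \<in> avoiding_in Y k"
  shows "\<exists>c\<in>R4. c \<otimes> y \<in> H"
proof -
  have Y: "subgroup Y G" "R4 \<subseteq> Y" "Y \<subseteq> carrier G" "card Y = card R4 * 2 ^ k"
    using Y by (auto simp: intermediate_subgroups_def)
  have HA: "H \<in> avoiding k" and HY: "H \<subseteq> Y" using H by (auto simp: avoiding_in_def)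
  have "R4 <#> H \<subseteq> Y" using HY Y(2) subgroup.m_closed[OF Y(1)] by (auto simp: set_mult_def)
  then have "R4 <#> H = Y"
    using card_subset_eq[OF finite_subset[OF Y(3) finite_carrier]] R4_mult_avoiding(1)[OF HA] Y(4)
    by (auto simp: intermediate_subgroups_def)
  then obtain c h where ch: "c \<in> R4" "h \<in> H" "y = c \<otimes> h" using y by (auto simp: set_mult_def)
  have "c \<in> carrier G" "h \<in> carrier G" using ch R4_subgroup avoidingD(4)[OF HA] subgroup.subset by blast+
  then have "h = inv c \<otimes> y" using ch(3) by (simp add: m_assoc[symmetric])
  then show ?thesis using subgroup.m_inv_closed[OF R4_subgroup ch(1)] ch(2) by blast
qed

text \<open>An \<open>H\<close> containing \<open>c \<notin> Cr\<close> is determined by its index-2 subgroup \<open>H \<inter> Cr\<close>.\<close>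

lemma card_avoiding_in_containing_le:
  assumes Y: "Y \<in> intermediate_subgroups (carrier G) R4 (Suc j)" and c: "c \<in> Y" "c \<notin> Cr"
  shows "card {H \<in> avoiding_in Y (Suc j). c \<in> H} \<le> 2 ^ j"
proof -
  let ?F = "{H \<in> avoiding_in Y (Suc j). c \<in> H}"
  have Y: "subgroup Y G" "R4 \<subseteq> Y" "Y \<subseteq> carrier G" "card Y = 4 * 2 ^ Suc j"
    using Y card_R4 by (auto simp: intermediate_subgroups_def)
  have "card Y = 2 * card (Y \<inter> Cr)"
    using Cr_index_two(2)[OF Y(1) finite_subset[OF Y(3) finite_carrier] c] .
  then have Y_Cr: "Y \<inter> Cr \<in> intermediate_subgroups Cr R4 j"
    using Y subgroups_Inter_pair[OF Y(1) Cr_subgroup] R4_subset_Cr card_R4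
    by (auto simp: intermediate_subgroups_def)
  have "H \<inter> Cr \<in> avoiding_in (Y \<inter> Cr) j" if H: "H \<in> ?F" for H
  proof -
    have HA: "H \<in> avoiding (Suc j)" and HY: "H \<subseteq> Y" and cH: "c \<in> H" using H by (auto simp: avoiding_in_def)
    note H' = avoidingD[OF HA]
    have "card H = 2 * card (H \<inter> Cr)" using Cr_index_two(2)[OF H'(1) H'(5) cH c(2)] .
    then show ?thesis
      using H' HY subgroups_Inter_pair[OF H'(1) Cr_subgroup] by (auto simp: avoiding_in_def avoiding_def)
  qed
  moreover have "inj_on (\<lambda>H. H \<inter> Cr) ?F"
  proof (rule inj_onI)
    have split: "H = (H \<inter> Cr) \<union> (\<otimes>) c ` (H \<inter> Cr)" if H: "H \<in> ?F" for H
    proof -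
      have HA: "H \<in> avoiding (Suc j)" "c \<in> H" using H by (auto simp: avoiding_in_def)
      show ?thesis using Cr_index_two(1)[OF avoidingD(1,5)[OF HA(1)] HA(2) c(2)] .
    qed
    fix H H' assume "H \<in> ?F" "H' \<in> ?F" "H \<inter> Cr = H' \<inter> Cr"
    then show "H = H'" using split by metis
  qed
  ultimately have "card ?F \<le> card (avoiding_in (Y \<inter> Cr) j)"
    using finite_avoiding_in by (intro card_inj_on_le[of "\<lambda>H. H \<inter> Cr"]) auto
  also have "\<dots> \<le> 2 ^ j" by (rule card_avoiding_in_Cr_le[OF Y_Cr])
  finally show ?thesis .
qed

lemma card_avoiding_in_le:
  assumes Y: "Y \<in> intermediate_subgroups (carrier G) R4 k" and not_Cr: "\<not> Y \<subseteq> Cr"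
  shows "card (avoiding_in Y k) \<le> 2 ^ Suc k"
proof -
  have Y_sub: "subgroup Y G" "R4 \<subseteq> Y" "Y \<subseteq> carrier G" "card Y = card R4 * 2 ^ k"
    using Y by (auto simp: intermediate_subgroups_def)
  obtain y where y: "y \<in> Y" "y \<notin> Cr" using not_Cr by blast
  obtain j where k: "k = Suc j"
  proof (cases k)
    case 0
    then have "Y = R4" using card_subset_eq[OF finite_subset[OF Y_sub(3) finite_carrier] Y_sub(2)] Y_sub(4) by simp
    then show ?thesis using R4_subset_Cr not_Cr by simp
  qed
  have coset: "c \<otimes> y \<in> Y" "c \<otimes> y \<notin> Cr" if c: "c \<in> R4" for c
  proof -
    have "c \<in> Cr" "c \<in> carrier G" using c R4_subset_Cr by (auto simp: Cr_def)
    then show "c \<otimes> y \<notin> Cr" using mult_mem_Cr_iff[of c y] y Y_sub(3) by auto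
    show "c \<otimes> y \<in> Y" using subgroup.m_closed[OF Y_sub(1) _ y(1)] c Y_sub(2) by blast
  qed
  have "avoiding_in Y k = (\<Union>c\<in>R4. {H \<in> avoiding_in Y k. c \<otimes> y \<in> H})"
    using avoiding_in_meets_coset[OF Y y(1)] by blast
  then have "card (avoiding_in Y k) \<le> (\<Sum>c\<in>R4. card {H \<in> avoiding_in Y k. c \<otimes> y \<in> H})"
    using card_UN_le[of R4 "\<lambda>c. {H \<in> avoiding_in Y k. c \<otimes> y \<in> H}"] by (simp add: R4_def)
  also have "\<dots> \<le> card R4 * 2 ^ j"
    using sum_bounded_above[of R4 "\<lambda>c. card {H \<in> avoiding_in Y k. c \<otimes> y \<in> H}" "2 ^ j"]
      card_avoiding_in_containing_le[of Y j] Y coset k by simp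
  finally show ?thesis using k card_R4 by simp
qed

text \<open>Sorting the subgroups \<open>H\<close> by \<open>R4 <#> H\<close>: among the \<open>[n - 2, k]\<^sub>2\<close> possible products,
  the \<open>[n - 3, k]\<^sub>2\<close> inside \<open>Cr\<close> contribute at most \<open>2 ^ k\<close> each, the others at most \<open>2 ^ Suc k\<close>.\<close>

lemma card_avoiding_le: "card (avoiding k) + 2 ^ k * gbinom2 (n - 3) k \<le> 2 ^ Suc k * gbinom2 (n - 2) k"
proof -
  let ?Ys = "intermediate_subgroups (carrier G) R4 k" and ?YC = "intermediate_subgroups Cr R4 k"
  have fin_Ys: "finite ?Ys" by (rule finite_intermediate_subgroups[OF finite_carrier])
  have YC_Ys: "?YC \<subseteq> ?Ys" by (auto simp: intermediate_subgroups_def Cr_def)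
  have "avoiding k \<subseteq> (\<Union>Y\<in>?Ys. avoiding_in Y k)"
  proof
    fix H assume H: "H \<in> avoiding k"
    then have "H \<in> avoiding_in (R4 <#> H) k" using R4_mult_avoiding(2) by (simp add: avoiding_in_def)
    then show "H \<in> (\<Union>Y\<in>?Ys. avoiding_in Y k)" using R4_mult_avoiding(1)[OF H] by blast
  qed
  then have "card (avoiding k) \<le> card (\<Union>Y\<in>?Ys. avoiding_in Y k)"
    by (rule card_mono[OF finite_UN_I[OF fin_Ys finite_avoiding_in]])
  also have "\<dots> \<le> (\<Sum>Y\<in>?Ys. card (avoiding_in Y k))" by (rule card_UN_le[OF fin_Ys])
  also have "\<dots> = (\<Sum>Y\<in>?Ys - ?YC. card (avoiding_in Y k)) + (\<Sum>Y\<in>?YC. card (avoiding_in Y k))"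
    by (rule sum.subset_diff[OF YC_Ys fin_Ys])
  also have "\<dots> \<le> (\<Sum>Y\<in>?Ys - ?YC. 2 ^ Suc k) + (\<Sum>Y\<in>?YC. 2 ^ k)"
  proof (rule add_mono; rule sum_mono)
    fix Y assume "Y \<in> ?Ys - ?YC"
    then have "Y \<in> ?Ys" "\<not> Y \<subseteq> Cr" by (auto simp: intermediate_subgroups_def)
    then show "card (avoiding_in Y k) \<le> 2 ^ Suc k" by (rule card_avoiding_in_le)
  qed (rule card_avoiding_in_Cr_le)
  also have "\<dots> = (card ?Ys - card ?YC) * 2 ^ Suc k + card ?YC * 2 ^ k"
    using card_Diff_subset[OF finite_subset[OF YC_Ys fin_Ys] YC_Ys] by simp
  finally have "card (avoiding k) \<le> (card ?Ys - card ?YC) * 2 ^ Suc k + card ?YC * 2 ^ k" .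
  moreover have "(card ?Ys - card ?YC) * 2 ^ Suc k + card ?YC * 2 ^ Suc k = card ?Ys * 2 ^ Suc k"
    using card_mono[OF fin_Ys YC_Ys] by (simp flip: add_mult_distrib)
  ultimately have "card (avoiding k) + card ?YC * 2 ^ k \<le> card ?Ys * 2 ^ Suc k" by simp
  then show ?thesis using card_intermediate_R4 card_intermediate_Cr_R4 by (simp add: mult.commute)
qed

lemma num_subgroups_of_order_Suc:
  "num_subgroups_of_order G (2 ^ Suc j) = gbinom2 (n - 1) j + card (avoiding (Suc j))"
proof -
  let ?S = "{H. subgroup H G \<and> card H = 2 ^ Suc j}"
  let ?A = "{H. subgroup H G \<and> card H = 2 ^ Suc j \<and> z \<in> H}"
  have fin: "finite ?S"
    by (rule finite_subset[of _ "Pow (carrier G)"]) (auto dest: subgroup.subset simp: finite_carrier)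
  have split: "?S = ?A \<union> avoiding (Suc j)" by (auto simp: avoiding_def)
  have "card (?A \<union> avoiding (Suc j)) = card ?A + card (avoiding (Suc j))"
    using fin unfolding split by (intro card_Un_disjoint) (auto simp: avoiding_def)
  then have "card ?S = card ?A + card (avoiding (Suc j))" unfolding split .
  then show ?thesis using card_subgroups_containing_z unfolding num_subgroups_of_order_def by simp
qed

lemma num_subgroups_of_order_bound:
  "num_subgroups_of_order G (2 ^ Suc j) + 2 ^ Suc j * gbinom2 (n - 3) (Suc j)
    \<le> gbinom2 (n - 1) j + 2 ^ Suc (Suc j) * gbinom2 (n - 2) (Suc j)"
  using num_subgroups_of_order_Suc[of j] card_avoiding_le[of "Suc j"] by simp

lemma intermediate_subgroups_one_Suc:
  "intermediate_subgroups E {\<one>} (Suc j) = intermediate_subgroups E Z2 j \<union> avoiding_in E (Suc j)"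
proof (intro equalityI subsetI)
  fix H assume "H \<in> intermediate_subgroups E {\<one>} (Suc j)"
  then have H: "subgroup H G" "H \<subseteq> E" "card H = 2 ^ Suc j" by (simp_all add: intermediate_subgroups_def)
  show "H \<in> intermediate_subgroups E Z2 j \<union> avoiding_in E (Suc j)"
  proof (cases "z \<in> H")
    case True
    then have "Z2 \<subseteq> H" using subgroup.one_closed[OF H(1)] by (simp add: Z2_def)
    then show ?thesis using H card_Z2 by (simp add: intermediate_subgroups_def)
  qed (use H in \<open>simp add: avoiding_in_def avoiding_def\<close>)
next
  fix H assume "H \<in> intermediate_subgroups E Z2 j \<union> avoiding_in E (Suc j)"
  then show "H \<in> intermediate_subgroups E {\<one>} (Suc j)"
    using card_Z2 subgroup.one_closed by (auto simp: intermediate_subgroups_def avoiding_in_def avoiding_def)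
qed

text \<open>The two summands of the \<open>q\<close>-Pascal recurrence count the subgroups containing and those
  avoiding \<open>z\<close>.\<close>

lemma card_avoiding_in_elementary:
  assumes el: "elementary_over E {\<one>}" and z: "z \<in> E" and card_E: "card E = 2 ^ Suc d"
  shows "card (avoiding_in E (Suc j)) = 2 ^ Suc j * gbinom2 d (Suc j)"
proof -
  have E: "subgroup E G" using el unfolding elementary_over_def by blast
  have fin: "finite E" using card_E card.infinite by (metis power_not_zero zero_neq_numeral)
  have "Z2 \<subseteq> E" using z subgroup.one_closed[OF E] by (auto simp: Z2_def)
  then have el_Z2: "elementary_over E Z2"
    using elementary_over_enlarge[OF el Z2_subgroup] by (simp add: Z2_def)
  have "card (intermediate_subgroups E Z2 j \<union> avoiding_in E (Suc j))
      = card (intermediate_subgroups E Z2 j) + card (avoiding_in E (Suc j))"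
    using finite_intermediate_subgroups[OF fin, of "{\<one>}" "Suc j"] unfolding intermediate_subgroups_one_Suc
    by (intro card_Un_disjoint) (auto simp: intermediate_subgroups_def avoiding_in_def avoiding_def Z2_def)
  moreover have "card (intermediate_subgroups E {\<one>} (Suc j)) = gbinom2 (Suc d) (Suc j)"
    using card_intermediate_subgroups[OF el fin, of "Suc d" "Suc j"] card_E by simp
  moreover have "card (intermediate_subgroups E Z2 j) = gbinom2 d j"
    using card_intermediate_subgroups[OF el_Z2 fin] card_E card_Z2 by simp
  ultimately show ?thesis by (simp add: intermediate_subgroups_one_Suc)
qed

end

lemma (in group) extraspecial_like_if_commutator_frattini:
  assumes fin: "finite (carrier G)" and card_G: "card (carrier G) = 2 ^ n" and n: "3 \<le> n"
    and two: "card (commutator_subgroup G) = 2" and frattini: "commutator_subgroup G = frattini G"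
  obtains z r where "extraspecial_like G z r n"
proof -
  obtain z where D: "commutator_subgroup G = {\<one>, z}" and z_ne: "z \<noteq> \<one>"
    using commutator_subgroup_two_elements[OF fin two] by blast
  have D_sub: "subgroup {\<one>, z} G"
    using derived_is_subgroup[OF subset_refl] D by (simp add: commutator_subgroup_def)
  have zG: "z \<in> carrier G" using subgroup.subset[OF D_sub] by blast
  have zz: "z \<otimes> z = \<one>" using subgroup.m_closed[OF D_sub, of z z] z_ne zG by auto
  note comm = commute_cases_commutator_subgroup[OF D]
  have central: "z \<otimes> x = x \<otimes> z" if x: "x \<in> carrier G" for x
    using comm[OF x zG] x zG zz z_ne by (auto simp: m_assoc[symmetric])
  have squares: "x \<otimes> x = \<one> \<or> x \<otimes> x = z" if x: "x \<in> carrier G" for x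
    using square_mem_frattini[OF fin card_G _ x] D frattini by auto
  obtain x y where x: "x \<in> carrier G" and y: "y \<in> carrier G" and ne: "x \<otimes> y \<noteq> y \<otimes> x"
    using commutator_subgroup_trivial_if_abelian D z_ne by blast
  then have xy: "x \<otimes> y = z \<otimes> (y \<otimes> x)" using comm by blast
  obtain r where "r \<in> carrier G" "r \<otimes> r = z" "\<exists>w\<in>carrier G. w \<otimes> r \<noteq> r \<otimes> w"
    using noncentral_square_root[OF zG z_ne zz central squares x y xy] by blast
  moreover have "x \<otimes> y = y \<otimes> x \<or> x \<otimes> y = y \<otimes> x \<otimes> z" if "x \<in> carrier G" "y \<in> carrier G" for x y
    using comm[OF that] central[of "y \<otimes> x"] that by auto
  ultimately have "extraspecial_like G z r n"
    using fin card_G n zG z_ne central squares by unfold_locales auto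
  then show ?thesis by (rule that)
qed

section \<open>The group \<open>D\<^sub>8 \<times> C\<^sub>2\<^sup>m\<close>\<close>

lemma carrier_D8: "carrier D8 = {(0, False), (1, False), (2, False), (3, False), (0, True), (1, True), (2, True), (3, True)}"
proof -
  have "{0..<4::int} = {0, 1, 2, 3}" by auto
  then show ?thesis unfolding D8_def by auto
qed

lemma mult_D8: "(a, b) \<otimes>\<^bsub>D8\<^esub> (c, d) = ((if b then a - c else a + c) mod 4, b \<noteq> d)"
  by (simp add: D8_def)

lemma one_D8: "\<one>\<^bsub>D8\<^esub> = (0, False)"
  by (simp add: D8_def)

lemma group_D8: "group D8"
proof (rule groupI)
  show "x \<otimes>\<^bsub>D8\<^esub> y \<in> carrier D8" if "x \<in> carrier D8" "y \<in> carrier D8" for x y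
    using that by (cases x, cases y) (simp add: D8_def)
  show "\<one>\<^bsub>D8\<^esub> \<in> carrier D8" by (simp add: D8_def)
  show "x \<otimes>\<^bsub>D8\<^esub> y \<otimes>\<^bsub>D8\<^esub> w = x \<otimes>\<^bsub>D8\<^esub> (y \<otimes>\<^bsub>D8\<^esub> w)" for x y w
    by (cases x, cases y, cases w) (simp add: mult_D8 mod_simps algebra_simps split: if_splits)
  show "\<one>\<^bsub>D8\<^esub> \<otimes>\<^bsub>D8\<^esub> x = x" if "x \<in> carrier D8" for x
    using that by (cases x) (simp add: D8_def)
  show "\<exists>y\<in>carrier D8. y \<otimes>\<^bsub>D8\<^esub> x = \<one>\<^bsub>D8\<^esub>" if "x \<in> carrier D8" for x
  proof (cases x)
    case (Pair a b)
    show ?thesis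
    proof (cases b)
      case True
      then show ?thesis using that Pair by (intro bexI[of _ x]) (simp_all add: D8_def)
    next
      case False
      then show ?thesis
        using that Pair by (intro bexI[of _ "((- a) mod 4, False)"]) (simp_all add: D8_def mod_simps)
    qed
  qed
qed

definition D8_V1 :: "(int \<times> bool) set" where "D8_V1 = {(0, False), (2, False), (0, True), (2, True)}"

definition D8_V2 :: "(int \<times> bool) set" where "D8_V2 = {(0, False), (2, False), (1, True), (3, True)}"

lemma D8_involutions: "d \<in> carrier D8 \<Longrightarrow> d \<otimes>\<^bsub>D8\<^esub> d = \<one>\<^bsub>D8\<^esub> \<Longrightarrow> d \<in> D8_V1 \<union> D8_V2"
  unfolding carrier_D8 by (auto simp: mult_D8 one_D8 D8_V1_def D8_V2_def)

lemma D8_noncommuting: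
  "d \<in> D8_V2 - D8_V1 \<Longrightarrow> d' \<in> D8_V1 - D8_V2 \<Longrightarrow> d \<otimes>\<^bsub>D8\<^esub> d' \<noteq> d' \<otimes>\<^bsub>D8\<^esub> d"
  by (auto simp: mult_D8 D8_V1_def D8_V2_def)

lemma subgroup_D8_V: "subgroup D8_V1 D8" "subgroup D8_V2 D8"
  by (auto intro!: group.subgroup_of_involutions[OF group_D8]
      simp: D8_V1_def D8_V2_def carrier_D8 mult_D8 one_D8)

lemma carrier_C2_pow: "carrier (C2_pow m) = {xs. set xs \<subseteq> {0, 1} \<and> length xs = m}"
proof -
  have Z: "carrier (integer_mod_group 2) = {0, 1}" by (auto simp: carrier_integer_mod_group)
  have "xs \<in> carrier (C2_pow m) \<longleftrightarrow> length xs = m \<and> (\<forall>i<m. xs ! i \<in> {0, 1})" for xs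
    using DirProd_list_carrier_mem[of xs "replicate m (integer_mod_group 2)"]
      DirProd_list_carrier_memI[of xs "replicate m (integer_mod_group 2)"]
    unfolding C2_pow_def by (auto simp: Z)
  then show ?thesis by (auto simp: set_conv_nth)
qed

lemma one_C2_pow: "\<one>\<^bsub>C2_pow m\<^esub> = replicate m 0"
  unfolding C2_pow_def DirProd_list_one by (induction m) simp_all

lemma group_C2_pow: "group (C2_pow m)"
  unfolding C2_pow_def by (rule DirProd_list_is_group) simp

lemma mult_C2_pow:
  "xs \<in> carrier (C2_pow m) \<Longrightarrow> ys \<in> carrier (C2_pow m)
    \<Longrightarrow> xs \<otimes>\<^bsub>C2_pow m\<^esub> ys = map2 (\<lambda>a b. (a + b) mod 2) xs ys"
proof (induction m arbitrary: xs ys)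
  case 0
  then show ?case by (simp add: C2_pow_def DirProd_list_def)
next
  case (Suc m)
  let ?Z = "integer_mod_group 2"
  obtain a as b bs where xs: "xs = a # as" and ys: "ys = b # bs"
    using Suc.prems by (auto simp: carrier_C2_pow length_Suc_conv)
  have mem: "(a, as) \<in> carrier (?Z \<times>\<times> C2_pow m)" "(b, bs) \<in> carrier (?Z \<times>\<times> C2_pow m)"
    using Suc.prems by (auto simp: xs ys carrier_C2_pow carrier_integer_mod_group)
  have "(\<lambda>(g, gs). g # gs) \<in> hom (?Z \<times>\<times> C2_pow m) (C2_pow (Suc m))"
    using DirProd_list_iso[of ?Z "replicate m ?Z"] by (simp add: C2_pow_def iso_def)
  then have "xs \<otimes>\<^bsub>C2_pow (Suc m)\<^esub> ys = ((a + b) mod 2) # (as \<otimes>\<^bsub>C2_pow m\<^esub> bs)"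
    using mem by (auto simp: xs ys hom_def)
  then show ?case using Suc.IH mem by (simp add: xs ys)
qed

lemma C2_pow_square: "xs \<in> carrier (C2_pow m) \<Longrightarrow> xs \<otimes>\<^bsub>C2_pow m\<^esub> xs = \<one>\<^bsub>C2_pow m\<^esub>"
proof -
  assume xs: "xs \<in> carrier (C2_pow m)"
  have "set xs \<subseteq> {0, 1} \<Longrightarrow> map2 (\<lambda>a b. (a + b) mod 2) xs xs = replicate (length xs) (0::int)"
    by (induction xs) auto
  then show ?thesis using xs by (simp add: mult_C2_pow one_C2_pow carrier_C2_pow)
qed

lemma C2_pow_commute:
  "xs \<in> carrier (C2_pow m) \<Longrightarrow> ys \<in> carrier (C2_pow m) \<Longrightarrow> xs \<otimes>\<^bsub>C2_pow m\<^esub> ys = ys \<otimes>\<^bsub>C2_pow m\<^esub> xs"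
  by (simp add: mult_C2_pow carrier_C2_pow list_eq_iff_nth_eq add.commute)

lemma card_carrier_C2_pow: "finite (carrier (C2_pow m))" "card (carrier (C2_pow m)) = 2 ^ m"
  using finite_lists_length_eq[of "{0, 1 :: int}" m] card_lists_length_eq[of "{0, 1 :: int}" m]
  by (simp_all add: carrier_C2_pow numeral_2_eq_2)

lemma group_D8_times_C2_pow: "group (D8_times_C2_pow m)"
  unfolding D8_times_C2_pow_def by (rule DirProd_group[OF group_D8 group_C2_pow])

lemma carrier_D8_times_C2_pow: "carrier (D8_times_C2_pow m) = carrier D8 \<times> carrier (C2_pow m)"
  and mult_D8_times_C2_pow:
    "(d, e) \<otimes>\<^bsub>D8_times_C2_pow m\<^esub> (d', e') = (d \<otimes>\<^bsub>D8\<^esub> d', e \<otimes>\<^bsub>C2_pow m\<^esub> e')"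
  and one_D8_times_C2_pow: "\<one>\<^bsub>D8_times_C2_pow m\<^esub> = ((0, False), replicate m 0)"
  by (simp_all add: D8_times_C2_pow_def one_D8 one_C2_pow)

lemma extraspecial_like_D8_times_C2_pow:
  "extraspecial_like (D8_times_C2_pow m) ((2, False), replicate m 0) ((1, False), replicate m 0) (m + 3)"
proof -
  let ?E = "C2_pow m"
  interpret E: group ?E by (rule group_C2_pow)
  have one_E: "replicate m 0 \<in> carrier ?E" using E.one_closed by (simp add: one_C2_pow)
  have E_one: "e \<otimes>\<^bsub>?E\<^esub> replicate m 0 = e" "replicate m 0 \<otimes>\<^bsub>?E\<^esub> e = e" if "e \<in> carrier ?E" for e
    using that E.l_one E.r_one by (simp_all add: one_C2_pow)
  note mult_T = mult_D8_times_C2_pow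
  show ?thesis
  proof (rule extraspecial_like.intro[OF group_D8_times_C2_pow extraspecial_like_axioms.intro],
      unfold carrier_D8_times_C2_pow one_D8_times_C2_pow)
    show "finite (carrier D8 \<times> carrier ?E)" using card_carrier_C2_pow(1) by (simp add: carrier_D8)
    show "card (carrier D8 \<times> carrier ?E) = 2 ^ (m + 3)"
      using card_carrier_C2_pow(2) by (simp add: carrier_D8 card_cartesian_product power_add)
    show "((2, False), replicate m 0) \<in> carrier D8 \<times> carrier ?E"
      "((1, False), replicate m 0) \<in> carrier D8 \<times> carrier ?E"
      using one_E by (simp_all add: carrier_D8)
    show "((2, False), replicate m 0) \<otimes>\<^bsub>D8_times_C2_pow m\<^esub> x = x \<otimes>\<^bsub>D8_times_C2_pow m\<^esub> ((2, False), replicate m 0)"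
      if "x \<in> carrier D8 \<times> carrier ?E" for x
      using that E_one unfolding carrier_D8 by (auto simp: mult_T mult_D8)
    show "x \<otimes>\<^bsub>D8_times_C2_pow m\<^esub> x = ((0, False), replicate m 0)
        \<or> x \<otimes>\<^bsub>D8_times_C2_pow m\<^esub> x = ((2, False), replicate m 0)"
      if "x \<in> carrier D8 \<times> carrier ?E" for x
      using that C2_pow_square unfolding carrier_D8 by (auto simp: mult_T mult_D8 one_C2_pow)
    show "x \<otimes>\<^bsub>D8_times_C2_pow m\<^esub> y = y \<otimes>\<^bsub>D8_times_C2_pow m\<^esub> x
        \<or> x \<otimes>\<^bsub>D8_times_C2_pow m\<^esub> y = y \<otimes>\<^bsub>D8_times_C2_pow m\<^esub> x \<otimes>\<^bsub>D8_times_C2_pow m\<^esub> ((2, False), replicate m 0)"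
      if "x \<in> carrier D8 \<times> carrier ?E" "y \<in> carrier D8 \<times> carrier ?E" for x y
      using that C2_pow_commute E_one E.m_closed
      unfolding carrier_D8 by (auto simp: mult_T mult_D8)
    show "((1, False), replicate m 0) \<otimes>\<^bsub>D8_times_C2_pow m\<^esub> ((1, False), replicate m 0) = ((2, False), replicate m 0)"
      using E_one one_E by (simp add: mult_T mult_D8)
    show "\<exists>y\<in>carrier D8 \<times> carrier ?E. y \<otimes>\<^bsub>D8_times_C2_pow m\<^esub> ((1, False), replicate m 0)
        \<noteq> ((1, False), replicate m 0) \<otimes>\<^bsub>D8_times_C2_pow m\<^esub> y"
      using one_E by (intro bexI[of _ "((0, True), replicate m 0)"]) (simp_all add: mult_T mult_D8 carrier_D8)
  qed simp_all
qed

context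
  fixes m :: nat
begin

interpretation T: extraspecial_like "D8_times_C2_pow m" "((2, False), replicate m 0)"
    "((1, False), replicate m 0)" "m + 3"
  by (rule extraspecial_like_D8_times_C2_pow)

lemma card_avoiding_in_times_C2_pow:
  assumes V: "subgroup V D8" "V \<subseteq> D8_V1 \<union> D8_V2" "(2, False) \<in> V" "card V = 2 ^ Suc d"
  shows "card (T.avoiding_in (V \<times> carrier (C2_pow m)) (Suc j)) = 2 ^ Suc j * gbinom2 (d + m) (Suc j)"
proof (rule T.card_avoiding_in_elementary)
  show "T.elementary_over (V \<times> carrier (C2_pow m)) {\<one>\<^bsub>D8_times_C2_pow m\<^esub>}"
  proof (rule T.elementary_over_one)
    show "subgroup (V \<times> carrier (C2_pow m)) (D8_times_C2_pow m)"
      using DirProd_subgroups[OF group_D8 V(1) group_C2_pow group.subgroup_self[OF group_C2_pow]]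
      by (simp add: D8_times_C2_pow_def)
    show "x \<otimes>\<^bsub>D8_times_C2_pow m\<^esub> x = \<one>\<^bsub>D8_times_C2_pow m\<^esub>" if "x \<in> V \<times> carrier (C2_pow m)" for x
      using that V(2) C2_pow_square
      by (auto simp: D8_V1_def D8_V2_def mult_D8_times_C2_pow one_D8_times_C2_pow mult_D8 one_C2_pow)
  qed
  show "((2, False), replicate m 0) \<in> V \<times> carrier (C2_pow m)"
    using V(3) group.is_monoid[OF group_C2_pow] monoid.one_closed by (fastforce simp: one_C2_pow)
  show "card (V \<times> carrier (C2_pow m)) = 2 ^ Suc (d + m)"
    using V(4) card_carrier_C2_pow(2) by (simp add: card_cartesian_product power_add)
qed

text \<open>A subgroup avoiding the centre of \<open>D\<^sub>8 \<times> C\<^sub>2\<^sup>m\<close> consists of involutions, and its elements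
  commute; so its \<open>D\<^sub>8\<close>-components cannot leave both Klein four-subgroups.\<close>

lemma avoiding_D8_times_C2_pow:
  "T.avoiding k = T.avoiding_in (D8_V1 \<times> carrier (C2_pow m)) k \<union> T.avoiding_in (D8_V2 \<times> carrier (C2_pow m)) k"
proof (intro equalityI subsetI)
  fix H assume H: "H \<in> T.avoiding k"
  have in_V: "fst x \<in> D8_V1 \<union> D8_V2" "snd x \<in> carrier (C2_pow m)" if "x \<in> H" for x
  proof -
    have x: "fst x \<in> carrier D8" "snd x \<in> carrier (C2_pow m)"
      using that T.avoidingD(4)[OF H] by (auto simp: carrier_D8_times_C2_pow)
    have "x \<otimes>\<^bsub>D8_times_C2_pow m\<^esub> x = \<one>\<^bsub>D8_times_C2_pow m\<^esub>" by (rule T.avoiding_square[OF H that])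
    then have "fst x \<otimes>\<^bsub>D8\<^esub> fst x = \<one>\<^bsub>D8\<^esub>"
      by (cases x) (simp add: mult_D8_times_C2_pow one_D8_times_C2_pow one_D8)
    then show "fst x \<in> D8_V1 \<union> D8_V2" "snd x \<in> carrier (C2_pow m)" using D8_involutions x by auto
  qed
  have "H \<subseteq> D8_V1 \<times> carrier (C2_pow m) \<or> H \<subseteq> D8_V2 \<times> carrier (C2_pow m)"
  proof (rule ccontr)
    assume "\<not> ?thesis"
    then obtain h h' where h: "h \<in> H" "h \<notin> D8_V1 \<times> carrier (C2_pow m)"
      and h': "h' \<in> H" "h' \<notin> D8_V2 \<times> carrier (C2_pow m)" by blast
    have "fst h \<in> D8_V2 - D8_V1" "fst h' \<in> D8_V1 - D8_V2"
      using in_V[OF h(1)] in_V[OF h'(1)] h(2) h'(2) by (auto simp: mem_Times_iff)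
    moreover have "h \<otimes>\<^bsub>D8_times_C2_pow m\<^esub> h' = h' \<otimes>\<^bsub>D8_times_C2_pow m\<^esub> h"
      using T.elementary_over_one_commute[OF T.elementary_avoiding[OF H] h(1) h'(1)] .
    then have "fst h \<otimes>\<^bsub>D8\<^esub> fst h' = fst h' \<otimes>\<^bsub>D8\<^esub> fst h"
      by (cases h, cases h') (simp add: mult_D8_times_C2_pow)
    ultimately show False using D8_noncommuting by blast
  qed
  then show "H \<in> T.avoiding_in (D8_V1 \<times> carrier (C2_pow m)) k \<union> T.avoiding_in (D8_V2 \<times> carrier (C2_pow m)) k"
    using H by (auto simp: T.avoiding_in_def)
qed (auto simp: T.avoiding_in_def)

lemma num_subgroups_of_order_D8_times_C2_pow:
  "num_subgroups_of_order (D8_times_C2_pow m) (2 ^ Suc j) + 2 ^ Suc j * gbinom2 m (Suc j)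
    = gbinom2 (m + 2) j + 2 ^ Suc (Suc j) * gbinom2 (m + 1) (Suc j)"
proof -
  let ?A = "\<lambda>V. T.avoiding_in (V \<times> carrier (C2_pow m)) (Suc j)"
  have "?A D8_V1 \<inter> ?A D8_V2 = ?A (D8_V1 \<inter> D8_V2)" by (auto simp: T.avoiding_in_def)
  then have "card (T.avoiding (Suc j)) + card (?A (D8_V1 \<inter> D8_V2)) = card (?A D8_V1) + card (?A D8_V2)"
    unfolding avoiding_D8_times_C2_pow using card_Un_Int[OF T.finite_avoiding_in T.finite_avoiding_in] by simp
  moreover have "card (?A D8_V1) = 2 ^ Suc j * gbinom2 (m + 1) (Suc j)"
    "card (?A D8_V2) = 2 ^ Suc j * gbinom2 (m + 1) (Suc j)"
    using card_avoiding_in_times_C2_pow[of _ 1] subgroup_D8_V by (simp_all add: D8_V1_def D8_V2_def)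
  moreover have "card (?A (D8_V1 \<inter> D8_V2)) = 2 ^ Suc j * gbinom2 m (Suc j)"
    using card_avoiding_in_times_C2_pow[of "D8_V1 \<inter> D8_V2" 0]
      group.subgroups_Inter_pair[OF group_D8 subgroup_D8_V] by (simp add: D8_V1_def D8_V2_def)
  ultimately show ?thesis using T.num_subgroups_of_order_Suc[of j] by simp
qed

end

theorem corollary2p7:
  fixes G :: "('a, 'b) monoid_scheme" and n k :: nat
  assumes "group G"
    and "finite (carrier G)"
    and "card (carrier G) = 2 ^ n"
    and "n \<ge> 3"
    and "extraspecial G \<or> almost_extraspecial G"
    and "k \<le> n"
  shows "num_subgroups_of_order G (2 ^ k) \<le> num_subgroups_of_order (D8_times_C2_pow (n - 3)) (2 ^ k)"
proof -
  interpret group G by fact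
  have "card (commutator_subgroup G) = 2" "commutator_subgroup G = frattini G"
    using assms(5) unfolding extraspecial_def almost_extraspecial_def by auto
  then obtain z r where "extraspecial_like G z r n"
    using extraspecial_like_if_commutator_frattini[OF assms(2-4)] by blast
  then interpret extraspecial_like G z r n .
  show ?thesis
  proof (cases k)
    case 0
    then show ?thesis
      using num_subgroups_of_order_1 group.num_subgroups_of_order_1[OF group_D8_times_C2_pow] by simp
  next
    case (Suc j)
    have "n - 3 + 2 = n - 1" "n - 3 + 1 = n - 2" using assms(4) by simp_all
    then show ?thesis
      using num_subgroups_of_order_bound[of j] num_subgroups_of_order_D8_times_C2_pow[of "n - 3" j] Suc by simp
  qed
qed

end
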